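(* Let $K \subseteq \mathbb{R}$ be compact and let $\gamma: K \to \mathbb{H}$ be continuous. Then $\gamma \in C^1_{\mathbb{H}}(K)$ if and only if the Pansu difference quotients of $\gamma$ converge uniformly on $K$ to horizontal points, i.e. for every $a \in K$ there is a horizontal point $p_a \in \mathbb{R}^2 \times \{0\}$ such that $$\lim_{\substack{|b-a|\to 0\\ a,b\in K}} \left| \delta_{1/(b-a)}\left(\gamma(a)^{-1} * \gamma(b)\right) - p_a \right| = 0,$$ the limit being taken jointly over pairs $a \neq b$ in $K$ (that is, for every $\varepsilon>0$ there is $\delta>0$ such that the displayed quantity is $<\varepsilon$ for all $a,b\in K$ with $0<|b-a|<\delta$).
   Context: The Heisenberg group $\mathbb{H}$ is $\mathbb{R}^3$ with group law $(x,y,z)*(x',y',z') = (x+x',\,y+y',\,z+z'+2(yx'-xy'))$; the inverse is $(x,y,z)^{-1}=(-x,-y,-z)$. Dilations are $\delta_r(x,y,z) = (rx,ry,r^2 z)$ for $r \neq 0$. A point of $\mathbb{H}$ is horizontal if it lies in $\mathbb{R}^2\times\{0\}$. An absolutely continuous curve $\Gamma=(f,g,h):\mathbb{R}\to\mathbb{R}^3$ is horizontal if $h' = 2(f'g - fg')$ almost everywhere. $C^m(\mathbb{R})$ denotes the $m$-times continuously differentiable real functions $f$ with $\sup_{x\in\mathbb{R}}|f^{(m)}(x)|<\infty$, and $C^m(\mathbb{R},\mathbb{R}^3)$ the curves whose components lie in $C^m(\mathbb{R})$. For compact $K\subseteq\mathbb{R}$ and $\gamma:K\to\mathbb{H}$,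 one writes $\gamma \in C^m_{\mathbb{H}}(K)$ if there is a horizontal curve $\Gamma\in C^m(\mathbb{R},\mathbb{R}^3)$ with $\Gamma|_K=\gamma$. *)

theory Defs
  imports "HOL-Analysis.Analysis"
begin

definition hmult :: "real \<times> real \<times> real \<Rightarrow> real \<times> real \<times> real \<Rightarrow> real \<times> real \<times> real" where
  "hmult p q = (case p of (x, y, z) \<Rightarrow> case q of (x', y', z') \<Rightarrow>
      (x + x', y + y', z + z' + 2 * (y * x' - x * y')))"

definition hinv :: "real \<times> real \<times> real \<Rightarrow> real \<times> real \<times> real" where
  "hinv p = (case p of (x, y, z) \<Rightarrow> (- x, - y, - z))"

definition hdil :: "real \<Rightarrow> real \<times> real \<times> real \<Rightarrow> real \<times> real \<times> real" where
  "hdil r p = (case p of (x, y, z) \<Rightarrow> (r * x, r * y, r^2 * z))"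

definition horizontal_point :: "real \<times> real \<times> real \<Rightarrow> bool" where
  "horizontal_point p \<longleftrightarrow> snd (snd p) = 0"

text \<open>Absolute continuity of a real function on a compact interval [a,b]
  (finite families of non-overlapping subintervals, listed in increasing order).\<close>
definition abs_cont_on :: "real \<Rightarrow> real \<Rightarrow> (real \<Rightarrow> real) \<Rightarrow> bool" where
  "abs_cont_on a b f \<longleftrightarrow>
     (\<forall>\<epsilon>>0. \<exists>\<delta>>0. \<forall>(n::nat) (s::nat \<Rightarrow> real) (t::nat \<Rightarrow> real).
        (\<forall>i<n. a \<le> s i \<and> s i \<le> t i \<and> t i \<le> b) \<and>
        (\<forall>i<n. \<forall>j<n. i < j \<longrightarrow> t i \<le> s j) \<and>
        (\<Sum>i<n. t i - s i) < \<delta>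
        \<longrightarrow> (\<Sum>i<n. \<bar>f (t i) - f (s i)\<bar>) < \<epsilon>)"

definition abs_cont :: "(real \<Rightarrow> real) \<Rightarrow> bool" where
  "abs_cont f \<longleftrightarrow> (\<forall>a b. a \<le> b \<longrightarrow> abs_cont_on a b f)"

definition horizontal_curve :: "(real \<Rightarrow> real \<times> real \<times> real) \<Rightarrow> bool" where
  "horizontal_curve \<Gamma> \<longleftrightarrow>
     (let f = (\<lambda>t. fst (\<Gamma> t)); g = (\<lambda>t. fst (snd (\<Gamma> t))); h = (\<lambda>t. snd (snd (\<Gamma> t)))
      in abs_cont f \<and> abs_cont g \<and> abs_cont h \<and>
         (AE t in lborel. \<exists>f' g' h'.
            (f has_real_derivative f') (at t) \<and> (g has_real_derivative g') (at t) \<and>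
            (h has_real_derivative h') (at t) \<and> h' = 2 * (f' * g t - f t * g')))"

definition C1_fun :: "(real \<Rightarrow> real) \<Rightarrow> bool" where
  "C1_fun f \<longleftrightarrow> (\<exists>f'. (\<forall>x. (f has_real_derivative f' x) (at x)) \<and> continuous_on UNIV f'
                     \<and> bounded (range f'))"

definition C1_curve :: "(real \<Rightarrow> real \<times> real \<times> real) \<Rightarrow> bool" where
  "C1_curve \<Gamma> \<longleftrightarrow> C1_fun (\<lambda>t. fst (\<Gamma> t)) \<and> C1_fun (\<lambda>t. fst (snd (\<Gamma> t)))
                    \<and> C1_fun (\<lambda>t. snd (snd (\<Gamma> t)))"

definition C1_H :: "real set \<Rightarrow> (real \<Rightarrow> real \<times> real \<times> real) \<Rightarrow> bool" where
  "C1_H K \<gamma> \<longleftrightarrow> (\<exists>\<Gamma>. horizontal_curve \<Gamma> \<and> C1_curve \<Gamma> \<and> (\<forall>t\<in>K. \<Gamma> t = \<gamma> t))"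

end

theory Submission
  imports Defs
begin

lemma pansu_quotient_eq:
  "hdil (1 / (b - a)) (hmult (hinv (x, y, z)) (x', y', z')) =
    ((x' - x) / (b - a), (y' - y) / (b - a), (z' - z + 2 * (x * y' - y * x')) / (b - a)^2)"
  by (simp add: hdil_def hmult_def hinv_def power_divide algebra_simps)

lemma norm_scaled_triple_less_imp:
  fixes r1 r2 r3 d :: real
  assumes "norm (r1 / d, r2 / d, r3 / d^2) < \<epsilon>" and "d \<noteq> 0"
  shows "\<bar>r1\<bar> \<le> \<epsilon> * \<bar>d\<bar>" "\<bar>r2\<bar> \<le> \<epsilon> * \<bar>d\<bar>" "\<bar>r3\<bar> \<le> \<epsilon> * d^2"
proof -
  have "norm (r2 / d, r3 / d^2) \<le> norm (r1 / d, r2 / d, r3 / d^2)"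
    by (rule norm_snd_le)
  then have "\<bar>r1 / d\<bar> \<le> \<epsilon>" "\<bar>r2 / d\<bar> \<le> \<epsilon>" "\<bar>r3 / d^2\<bar> \<le> \<epsilon>"
    using assms(1) norm_fst_le[of "r1 / d" "(r2 / d, r3 / d^2)"] norm_fst_le[of "r2 / d" "r3 / d^2"]
      norm_snd_le[of "r3 / d^2" "r2 / d"] by auto
  then show "\<bar>r1\<bar> \<le> \<epsilon> * \<bar>d\<bar>" "\<bar>r2\<bar> \<le> \<epsilon> * \<bar>d\<bar>" "\<bar>r3\<bar> \<le> \<epsilon> * d^2"
    using assms(2) by (simp_all add: abs_div pos_divide_le_eq)
qed

lemma norm_scaled_triple_less:
  fixes r1 r2 r3 d :: real
  assumes "\<bar>r1\<bar> \<le> \<epsilon> / 4 * \<bar>d\<bar>" "\<bar>r2\<bar> \<le> \<epsilon> / 4 * \<bar>d\<bar>" "\<bar>r3\<bar> \<le> \<epsilon> / 4 * d^2"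
    and "d \<noteq> 0" "\<epsilon> > 0"
  shows "norm (r1 / d, r2 / d, r3 / d^2) < \<epsilon>"
proof -
  have "\<bar>r1 / d\<bar> \<le> \<epsilon> / 4" "\<bar>r2 / d\<bar> \<le> \<epsilon> / 4" "\<bar>r3 / d^2\<bar> \<le> \<epsilon> / 4"
    using assms by (simp_all add: abs_div pos_divide_le_eq)
  moreover have "norm (r1 / d, r2 / d, r3 / d^2) \<le> \<bar>r1 / d\<bar> + \<bar>r2 / d\<bar> + \<bar>r3 / d^2\<bar>"
    using norm_Pair_le[of "r1 / d" "(r2 / d, r3 / d^2)"] norm_Pair_le[of "r2 / d" "r3 / d^2"] by simp
  ultimately show ?thesis using \<open>\<epsilon> > 0\<close> by linarith
qed

definition whitney_horizontal ::
    "real set \<Rightarrow> (real \<Rightarrow> real) \<Rightarrow> (real \<Rightarrow> real) \<Rightarrow> (real \<Rightarrow> real) \<Rightarrow>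
     (real \<Rightarrow> real) \<Rightarrow> (real \<Rightarrow> real) \<Rightarrow> bool" where
  "whitney_horizontal K f g h u v \<longleftrightarrow>
     (\<forall>\<epsilon>>0. \<exists>\<delta>>0. \<forall>a\<in>K. \<forall>b\<in>K. \<bar>b - a\<bar> < \<delta> \<longrightarrow>
        \<bar>f b - f a - u a * (b - a)\<bar> \<le> \<epsilon> * \<bar>b - a\<bar> \<and>
        \<bar>g b - g a - v a * (b - a)\<bar> \<le> \<epsilon> * \<bar>b - a\<bar> \<and>
        \<bar>h b - h a + 2 * (f a * g b - g a * f b)\<bar> \<le> \<epsilon> * (b - a)^2)"

lemma whitney_horizontalD:
  assumes "whitney_horizontal K f g h u v" and "\<epsilon> > 0"
  obtains \<delta> where "\<delta> > 0" and "\<And>a b. a \<in> K \<Longrightarrow> b \<in> K \<Longrightarrow> \<bar>b - a\<bar> < \<delta> \<Longrightarrow>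
      \<bar>f b - f a - u a * (b - a)\<bar> \<le> \<epsilon> * \<bar>b - a\<bar> \<and>
      \<bar>g b - g a - v a * (b - a)\<bar> \<le> \<epsilon> * \<bar>b - a\<bar> \<and>
      \<bar>h b - h a + 2 * (f a * g b - g a * f b)\<bar> \<le> \<epsilon> * (b - a)^2"
  using assms unfolding whitney_horizontal_def by blast

lemma pansu_convergence_iff_whitney_horizontal:
  assumes \<gamma>: "\<And>t. t \<in> K \<Longrightarrow> \<gamma> t = (f t, g t, h t)"
    and p: "\<And>t. t \<in> K \<Longrightarrow> p t = (u t, v t, 0)"
  shows "(\<forall>\<epsilon>>0. \<exists>\<delta>>0. \<forall>a\<in>K. \<forall>b\<in>K. 0 < \<bar>b - a\<bar> \<and> \<bar>b - a\<bar> < \<delta> \<longrightarrow>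
            norm (hdil (1 / (b - a)) (hmult (hinv (\<gamma> a)) (\<gamma> b)) - p a) < \<epsilon>)
         \<longleftrightarrow> whitney_horizontal K f g h u v"
    (is "?pansu \<longleftrightarrow> _")
proof -
  have quotient: "hdil (1 / (b - a)) (hmult (hinv (\<gamma> a)) (\<gamma> b)) - p a =
      ((f b - f a - u a * (b - a)) / (b - a), (g b - g a - v a * (b - a)) / (b - a),
       (h b - h a + 2 * (f a * g b - g a * f b)) / (b - a)^2)" if "a \<in> K" "b \<in> K" "a \<noteq> b" for a b
    using that by (simp add: \<gamma> p pansu_quotient_eq diff_divide_distrib)
  show ?thesis
  proof
    assume ?pansu
    show "whitney_horizontal K f g h u v"
      unfolding whitney_horizontal_def
    proof (intro allI impI)
      fix \<epsilon> :: real assume "\<epsilon> > 0"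
      with \<open>?pansu\<close> obtain \<delta> where "\<delta> > 0" and \<delta>: "\<forall>a\<in>K. \<forall>b\<in>K. 0 < \<bar>b - a\<bar> \<and> \<bar>b - a\<bar> < \<delta> \<longrightarrow>
          norm (hdil (1 / (b - a)) (hmult (hinv (\<gamma> a)) (\<gamma> b)) - p a) < \<epsilon>"
        by blast
      have "\<bar>f b - f a - u a * (b - a)\<bar> \<le> \<epsilon> * \<bar>b - a\<bar> \<and> \<bar>g b - g a - v a * (b - a)\<bar> \<le> \<epsilon> * \<bar>b - a\<bar> \<and>
          \<bar>h b - h a + 2 * (f a * g b - g a * f b)\<bar> \<le> \<epsilon> * (b - a)^2"
        if "a \<in> K" "b \<in> K" "\<bar>b - a\<bar> < \<delta>" for a b
      proof (cases "a = b")
        case False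
        with \<delta> that have "norm (hdil (1 / (b - a)) (hmult (hinv (\<gamma> a)) (\<gamma> b)) - p a) < \<epsilon>"
          by auto
        then have "norm ((f b - f a - u a * (b - a)) / (b - a), (g b - g a - v a * (b - a)) / (b - a),
            (h b - h a + 2 * (f a * g b - g a * f b)) / (b - a)^2) < \<epsilon>"
          unfolding quotient[OF that(1,2) False] .
        from norm_scaled_triple_less_imp[OF this] False show ?thesis by simp
      qed simp
      with \<open>\<delta> > 0\<close> show "\<exists>\<delta>>0. \<forall>a\<in>K. \<forall>b\<in>K. \<bar>b - a\<bar> < \<delta> \<longrightarrow>
          \<bar>f b - f a - u a * (b - a)\<bar> \<le> \<epsilon> * \<bar>b - a\<bar> \<and> \<bar>g b - g a - v a * (b - a)\<bar> \<le> \<epsilon> * \<bar>b - a\<bar> \<and>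
          \<bar>h b - h a + 2 * (f a * g b - g a * f b)\<bar> \<le> \<epsilon> * (b - a)^2"
        by blast
    qed
  next
    assume "whitney_horizontal K f g h u v"
    show ?pansu
    proof (intro allI impI)
      fix \<epsilon> :: real assume "\<epsilon> > 0"
      then obtain \<delta> where "\<delta> > 0" and \<delta>: "\<And>a b. a \<in> K \<Longrightarrow> b \<in> K \<Longrightarrow> \<bar>b - a\<bar> < \<delta> \<Longrightarrow>
          \<bar>f b - f a - u a * (b - a)\<bar> \<le> \<epsilon> / 4 * \<bar>b - a\<bar> \<and> \<bar>g b - g a - v a * (b - a)\<bar> \<le> \<epsilon> / 4 * \<bar>b - a\<bar> \<and>
          \<bar>h b - h a + 2 * (f a * g b - g a * f b)\<bar> \<le> \<epsilon> / 4 * (b - a)^2"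
        using whitney_horizontalD[OF \<open>whitney_horizontal K f g h u v\<close>, of "\<epsilon> / 4"] by auto
      have "norm (hdil (1 / (b - a)) (hmult (hinv (\<gamma> a)) (\<gamma> b)) - p a) < \<epsilon>"
        if "a \<in> K" "b \<in> K" "0 < \<bar>b - a\<bar>" "\<bar>b - a\<bar> < \<delta>" for a b
      proof -
        have "a \<noteq> b" using that(3) by auto
        then show ?thesis
          using \<delta>[OF that(1,2,4)] \<open>\<epsilon> > 0\<close> unfolding quotient[OF that(1,2) \<open>a \<noteq> b\<close>]
          by (intro norm_scaled_triple_less) auto
      qed
      with \<open>\<delta> > 0\<close> show "\<exists>\<delta>>0. \<forall>a\<in>K. \<forall>b\<in>K. 0 < \<bar>b - a\<bar> \<and> \<bar>b - a\<bar> < \<delta> \<longrightarrow>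
          norm (hdil (1 / (b - a)) (hmult (hinv (\<gamma> a)) (\<gamma> b)) - p a) < \<epsilon>"
        by blast
    qed
  qed
qed

lemma lipschitz_imp_abs_cont:
  assumes "\<And>x y. \<bar>f x - f y\<bar> \<le> B * \<bar>x - y\<bar>"
  shows "abs_cont f"
  unfolding abs_cont_def abs_cont_on_def
proof (intro allI impI exI conjI)
  fix \<epsilon> :: real and a b :: real and n :: nat and s t :: "nat \<Rightarrow> real"
  assume "\<epsilon> > 0"
  then show "\<epsilon> / (\<bar>B\<bar> + 1) > 0" by simp
  assume "(\<forall>i<n. a \<le> s i \<and> s i \<le> t i \<and> t i \<le> b) \<and> (\<forall>i<n. \<forall>j<n. i < j \<longrightarrow> t i \<le> s j) \<and>
    (\<Sum>i<n. t i - s i) < \<epsilon> / (\<bar>B\<bar> + 1)"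
  then have st: "\<And>i. i < n \<Longrightarrow> s i \<le> t i" and short: "(\<Sum>i<n. t i - s i) < \<epsilon> / (\<bar>B\<bar> + 1)"
    by auto
  have "(\<Sum>i<n. \<bar>f (t i) - f (s i)\<bar>) \<le> (\<Sum>i<n. \<bar>B\<bar> * (t i - s i))"
  proof (rule sum_mono)
    fix i assume "i \<in> {..<n}"
    then have "\<bar>t i - s i\<bar> = t i - s i" using st by simp
    then show "\<bar>f (t i) - f (s i)\<bar> \<le> \<bar>B\<bar> * (t i - s i)"
      using assms[of "t i" "s i"] by (metis abs_ge_self abs_ge_zero mult_right_mono order_trans)
  qed
  also have "\<dots> = \<bar>B\<bar> * (\<Sum>i<n. t i - s i)" by (simp add: sum_distrib_left)
  also have "\<dots> \<le> \<bar>B\<bar> * (\<epsilon> / (\<bar>B\<bar> + 1))" using short by (intro mult_left_mono) auto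
  also have "\<dots> < \<epsilon>" using \<open>\<epsilon> > 0\<close> by (simp add: field_simps)
  finally show "(\<Sum>i<n. \<bar>f (t i) - f (s i)\<bar>) < \<epsilon>" .
qed

lemma C1_fun_imp_abs_cont:
  assumes "C1_fun f"
  shows "abs_cont f"
proof -
  obtain f' where f': "\<And>x. (f has_real_derivative f' x) (at x)" and "bounded (range f')"
    using assms unfolding C1_fun_def by blast
  then obtain B where "\<And>x. \<bar>f' x\<bar> \<le> B" by (auto simp: bounded_iff)
  have "\<bar>f x - f y\<bar> \<le> B * \<bar>x - y\<bar>" for x y
    using field_differentiable_bound[of UNIV f f' B x y] f' \<open>\<And>x. \<bar>f' x\<bar> \<le> B\<close>
    by (simp add: has_field_derivative_at_within)
  then show ?thesis by (rule lipschitz_imp_abs_cont)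
qed

lemma continuous_AE_lborel_eq_0:
  fixes \<phi> :: "real \<Rightarrow> real"
  assumes "continuous_on UNIV \<phi>" and "AE t in lborel. \<phi> t = 0"
  shows "\<phi> x = 0"
proof (rule ccontr)
  assume "\<phi> x \<noteq> 0"
  have "open {t. \<phi> t \<noteq> 0}"
    using open_Collect_neq[OF assms(1) continuous_on_const] .
  then obtain e where "e > 0" and ball: "ball x e \<subseteq> {t. \<phi> t \<noteq> 0}"
    using \<open>\<phi> x \<noteq> 0\<close> open_contains_ball by blast
  from assms(2) obtain N where N: "N \<in> null_sets lborel" "{t. \<phi> t \<noteq> 0} \<subseteq> N"
    by (auto elim!: AE_E simp: null_sets_def)
  have "{x - e / 2..x + e / 2} \<subseteq> N"
    using ball N(2) \<open>e > 0\<close> by (auto simp: dist_real_def subset_iff)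
  then have "emeasure lborel {x - e / 2..x + e / 2} \<le> emeasure lborel N"
    by (intro emeasure_mono) (use N in auto)
  then show False using N(1) \<open>e > 0\<close> by (simp add: null_setsD1)
qed

lemma abs_linearization_le:
  fixes Y :: "real \<Rightarrow> real"
  assumes "continuous_on (closed_segment a b) Y"
    and "\<And>x. x \<in> open_segment a b \<Longrightarrow> (Y has_real_derivative Y' x) (at x)"
    and "\<And>x. x \<in> open_segment a b \<Longrightarrow> \<bar>Y' x - D\<bar> \<le> \<epsilon>"
  shows "\<bar>Y b - Y a - D * (b - a)\<bar> \<le> \<epsilon> * \<bar>b - a\<bar>"
proof -
  have *: "\<bar>Y y - Y x - D * (y - x)\<bar> \<le> \<epsilon> * \<bar>y - x\<bar>"
    if "x < y" "closed_segment a b = {x..y}" "open_segment a b = {x<..<y}" for x y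
  proof -
    have "continuous_on {x..y} Y" using assms(1) that(2) by simp
    moreover have "Y differentiable at z" if "x < z" "z < y" for z
      using assms(2)[of z] \<open>open_segment a b = {x<..<y}\<close> that real_differentiable_def by auto
    ultimately obtain l z where "x < z" "z < y" "(Y has_real_derivative l) (at z)" "Y y - Y x = (y - x) * l"
      using MVT[OF \<open>x < y\<close>] by blast
    moreover from this have "l = Y' z" using DERIV_unique assms(2) that(3) by fastforce
    ultimately have "Y y - Y x - D * (y - x) = (Y' z - D) * (y - x)" and "\<bar>Y' z - D\<bar> \<le> \<epsilon>"
      using assms(3)[of z] that(3) by (auto simp: algebra_simps)
    moreover have "\<bar>Y' z - D\<bar> * (y - x) \<le> \<epsilon> * (y - x)"
      using \<open>\<bar>Y' z - D\<bar> \<le> \<epsilon>\<close> \<open>x < y\<close> by (intro mult_right_mono) auto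
    ultimately show ?thesis
      using \<open>x < y\<close> by (simp add: abs_mult)
  qed
  consider "a < b" | "b < a" | "a = b" by linarith
  then show ?thesis
  proof cases
    case 1
    then show ?thesis by (intro *) (simp_all add: closed_segment_eq_real_ivl open_segment_eq_real_ivl)
  next
    case 2
    then have "\<bar>Y a - Y b - D * (a - b)\<bar> \<le> \<epsilon> * \<bar>a - b\<bar>"
      by (intro *) (simp_all add: closed_segment_eq_real_ivl open_segment_eq_real_ivl)
    then show ?thesis by (simp add: abs_minus_commute algebra_simps)
  qed simp
qed

lemma uniform_linearization:
  assumes deriv: "\<And>x. (F has_real_derivative F' x) (at x)" and "continuous_on UNIV F'" and "\<epsilon> > 0"
  obtains \<delta> where "\<delta> > 0"
    and "\<And>a b. a \<in> {l..r} \<Longrightarrow> b \<in> {l..r} \<Longrightarrow> \<bar>b - a\<bar> < \<delta> \<Longrightarrow>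
           \<bar>F b - F a - F' a * (b - a)\<bar> \<le> \<epsilon> * \<bar>b - a\<bar>"
proof -
  have "uniformly_continuous_on {l..r} F'"
    using \<open>continuous_on UNIV F'\<close> by (intro compact_uniformly_continuous) (auto intro: continuous_on_subset)
  then obtain \<delta> where "\<delta> > 0"
    and \<delta>: "\<And>x y. x \<in> {l..r} \<Longrightarrow> y \<in> {l..r} \<Longrightarrow> dist y x < \<delta> \<Longrightarrow> dist (F' y) (F' x) < \<epsilon>"
    using \<open>\<epsilon> > 0\<close> unfolding uniformly_continuous_on_def by metis
  have "\<bar>F b - F a - F' a * (b - a)\<bar> \<le> \<epsilon> * \<bar>b - a\<bar>"
    if "a \<in> {l..r}" "b \<in> {l..r}" "\<bar>b - a\<bar> < \<delta>" for a b
  proof (rule abs_linearization_le)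
    show "continuous_on (closed_segment a b) F"
      using deriv by (meson DERIV_isCont continuous_at_imp_continuous_on)
    fix x assume "x \<in> open_segment a b"
    then have "x \<in> {l..r}" "\<bar>x - a\<bar> \<le> \<bar>b - a\<bar>"
      using that closed_segment_subset[of a "{l..r}" b] dist_in_closed_segment[of x a b]
      by (auto simp: dist_real_def open_closed_segment)
    then show "\<bar>F' x - F' a\<bar> \<le> \<epsilon>"
      using \<delta>[of a x] that by (simp add: dist_real_def abs_minus_commute)
  qed (rule deriv)
  with \<open>\<delta> > 0\<close> show ?thesis using that by blast
qed

lemma has_real_derivative_at_set_point:
  fixes Y Y' :: "real \<Rightarrow> real"
  assumes "isCont Y' c"
    and on_K: "\<And>\<epsilon>. \<epsilon> > 0 \<Longrightarrow> \<exists>\<delta>>0. \<forall>a\<in>K. \<bar>a - c\<bar> < \<delta> \<longrightarrow> \<bar>Y a - Y c - Y' c * (a - c)\<bar> \<le> \<epsilon> * \<bar>a - c\<bar>"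
    and off_K: "\<And>t. t \<notin> K \<Longrightarrow> \<exists>k\<in>K \<inter> closed_segment c t. continuous_on (closed_segment k t) Y \<and>
                   (\<forall>x\<in>open_segment k t. (Y has_real_derivative Y' x) (at x))"
  shows "(Y has_real_derivative Y' c) (at c)"
  unfolding has_field_derivative_def has_derivative_at_alt
proof (intro conjI allI impI bounded_linear_mult_right)
  fix \<epsilon> :: real assume "\<epsilon> > 0"
  obtain \<delta>1 where "\<delta>1 > 0" and \<delta>1: "\<And>a. a \<in> K \<Longrightarrow> \<bar>a - c\<bar> < \<delta>1 \<Longrightarrow> \<bar>Y a - Y c - Y' c * (a - c)\<bar> \<le> \<epsilon> * \<bar>a - c\<bar>"
    using on_K[OF \<open>\<epsilon> > 0\<close>] by blast
  obtain \<delta>2 where "\<delta>2 > 0" and \<delta>2: "\<And>x. \<bar>x - c\<bar> < \<delta>2 \<Longrightarrow> \<bar>Y' x - Y' c\<bar> < \<epsilon>"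
    using \<open>isCont Y' c\<close> \<open>\<epsilon> > 0\<close> unfolding continuous_at_eps_delta dist_real_def by blast
  have "\<bar>Y t - Y c - Y' c * (t - c)\<bar> \<le> \<epsilon> * \<bar>t - c\<bar>" if t: "\<bar>t - c\<bar> < min \<delta>1 \<delta>2" for t
  proof (cases "t \<in> K")
    case True
    then show ?thesis using \<delta>1 t by simp
  next
    case False
    then obtain k where "k \<in> K" and k: "k \<in> closed_segment c t"
      and cont: "continuous_on (closed_segment k t) Y"
      and deriv: "\<And>x. x \<in> open_segment k t \<Longrightarrow> (Y has_real_derivative Y' x) (at x)"
      using off_K by blast
    have near: "\<bar>x - c\<bar> \<le> \<bar>t - c\<bar>" if "x \<in> closed_segment k t" for x
      using that k by (auto simp: closed_segment_eq_real_ivl split: if_splits)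
    have "\<bar>Y' x - Y' c\<bar> \<le> \<epsilon>" if "x \<in> open_segment k t" for x
      using \<delta>2[of x] near[OF open_closed_segment[OF that]] t by simp
    with cont deriv have off: "\<bar>Y t - Y k - Y' c * (t - k)\<bar> \<le> \<epsilon> * \<bar>t - k\<bar>"
      by (rule abs_linearization_le)
    have on: "\<bar>Y k - Y c - Y' c * (k - c)\<bar> \<le> \<epsilon> * \<bar>k - c\<bar>"
      using \<delta>1[OF \<open>k \<in> K\<close>] near[of k] t by simp
    have "Y t - Y c - Y' c * (t - c) = (Y t - Y k - Y' c * (t - k)) + (Y k - Y c - Y' c * (k - c))"
      by (simp add: algebra_simps)
    then have "\<bar>Y t - Y c - Y' c * (t - c)\<bar> \<le> \<epsilon> * \<bar>t - k\<bar> + \<epsilon> * \<bar>k - c\<bar>"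
      using abs_triangle_ineq[of "Y t - Y k - Y' c * (t - k)" "Y k - Y c - Y' c * (k - c)"] off on
      by linarith
    also have "\<dots> = \<epsilon> * \<bar>t - c\<bar>"
      using k by (auto simp: closed_segment_eq_real_ivl distrib_left[symmetric] split: if_splits)
    finally show ?thesis .
  qed
  then show "\<exists>\<delta>>0. \<forall>t. norm (t - c) < \<delta> \<longrightarrow> norm (Y t - Y c - Y' c * (t - c)) \<le> \<epsilon> * norm (t - c)"
    using \<open>\<delta>1 > 0\<close> \<open>\<delta>2 > 0\<close> by (intro exI[of _ "min \<delta>1 \<delta>2"] conjI allI impI) auto
qed

lemma bounded_range_if_constant_outside:
  fixes \<phi> :: "real \<Rightarrow> real"
  assumes "continuous_on UNIV \<phi>" and "\<And>t. t \<le> l \<Longrightarrow> \<phi> t = \<phi> l" and "\<And>t. r \<le> t \<Longrightarrow> \<phi> t = \<phi> r"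
  shows "bounded (range \<phi>)"
proof -
  have "range \<phi> \<subseteq> \<phi> ` ({l..r} \<union> {l, r})"
  proof
    fix y assume "y \<in> range \<phi>"
    then obtain t where "y = \<phi> t" by blast
    then show "y \<in> \<phi> ` ({l..r} \<union> {l, r})"
      using assms(2)[of t] assms(3)[of t] by (cases "t \<le> l"; cases "r \<le> t") auto
  qed
  moreover have "compact (\<phi> ` ({l..r} \<union> {l, r}))"
    using assms(1) by (intro compact_continuous_image) (auto intro: continuous_on_subset)
  ultimately show ?thesis by (meson bounded_subset compact_imp_bounded)
qed

lemma horizontal_curve_derivative_eq:
  assumes "horizontal_curve (\<lambda>t. (F t, G t, H t))"
    and F: "\<And>t. (F has_real_derivative F' t) (at t)" "continuous_on UNIV F'"
    and G: "\<And>t. (G has_real_derivative G' t) (at t)" "continuous_on UNIV G'"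
    and H: "\<And>t. (H has_real_derivative H' t) (at t)" "continuous_on UNIV H'"
  shows "H' t = 2 * (F' t * G t - F t * G' t)"
proof -
  have "AE t in lborel. \<exists>f' g' h'. (F has_real_derivative f') (at t) \<and>
      (G has_real_derivative g') (at t) \<and> (H has_real_derivative h') (at t) \<and>
      h' = 2 * (f' * G t - F t * g')"
    using assms(1) unfolding horizontal_curve_def Let_def by simp
  then have "AE t in lborel. H' t - 2 * (F' t * G t - F t * G' t) = 0"
  proof (rule eventually_mono)
    fix t assume "\<exists>f' g' h'. (F has_real_derivative f') (at t) \<and>
      (G has_real_derivative g') (at t) \<and> (H has_real_derivative h') (at t) \<and>
      h' = 2 * (f' * G t - F t * g')"
    then obtain f' g' h' where "(F has_real_derivative f') (at t)" "(G has_real_derivative g') (at t)"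
      "(H has_real_derivative h') (at t)" "h' = 2 * (f' * G t - F t * g')"
      by blast
    moreover from this have "f' = F' t" "g' = G' t" "h' = H' t"
      using DERIV_unique F(1) G(1) H(1) by blast+
    ultimately show "H' t - 2 * (F' t * G t - F t * G' t) = 0" by simp
  qed
  moreover have "continuous_on UNIV (\<lambda>t. H' t - 2 * (F' t * G t - F t * G' t))"
    using F G H by (intro continuous_intros)
      (auto intro: DERIV_continuous_on has_field_derivative_at_within)
  ultimately show ?thesis
    using continuous_AE_lborel_eq_0 by fastforce
qed

lemma horizontal_lift_defect_le:
  assumes F: "\<And>t. (F has_real_derivative F' t) (at t)"
    and G: "\<And>t. (G has_real_derivative G' t) (at t)"
    and H: "\<And>t. (H has_real_derivative 2 * (F' t * G t - F t * G' t)) (at t)"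
    and bound: "\<And>t. t \<in> closed_segment a b \<Longrightarrow> \<bar>F' t\<bar> \<le> B \<and> \<bar>G' t\<bar> \<le> B"
    and linear: "\<And>t. t \<in> closed_segment a b \<Longrightarrow>
      \<bar>F a - F t - F' t * (a - t)\<bar> \<le> \<eta> * \<bar>b - a\<bar> \<and> \<bar>G a - G t - G' t * (a - t)\<bar> \<le> \<eta> * \<bar>b - a\<bar>"
  shows "\<bar>H b - H a + 2 * (F a * G b - G a * F b)\<bar> \<le> 4 * B * \<eta> * (b - a)^2"
proof -
  define \<phi> where "\<phi> t = H t + 2 * (F a * G t - G a * F t)" for t
  define \<phi>' where "\<phi>' t = 2 * (G' t * (F a - F t - F' t * (a - t)) - F' t * (G a - G t - G' t * (a - t)))"
    for t
  have "(\<phi> has_real_derivative \<phi>' t) (at t)" for t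
    unfolding \<phi>_def[abs_def] \<phi>'_def
    by (rule derivative_eq_intros F G H refl)+ (simp add: algebra_simps)
  moreover have "\<bar>\<phi>' t - 0\<bar> \<le> 4 * B * \<eta> * \<bar>b - a\<bar>" if "t \<in> open_segment a b" for t
  proof -
    have t: "t \<in> closed_segment a b" using that by (rule open_closed_segment)
    have "B \<ge> 0" using bound[OF t] by linarith
    with bound[OF t] linear[OF t]
    have "\<bar>G' t * (F a - F t - F' t * (a - t))\<bar> \<le> B * (\<eta> * \<bar>b - a\<bar>)"
      "\<bar>F' t * (G a - G t - G' t * (a - t))\<bar> \<le> B * (\<eta> * \<bar>b - a\<bar>)"
      unfolding abs_mult by (auto intro: mult_mono)
    then show ?thesis unfolding \<phi>'_def by (simp add: abs_le_iff algebra_simps)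
  qed
  ultimately have "\<bar>\<phi> b - \<phi> a - 0 * (b - a)\<bar> \<le> 4 * B * \<eta> * \<bar>b - a\<bar> * \<bar>b - a\<bar>"
    by (intro abs_linearization_le) (auto intro: DERIV_isCont continuous_at_imp_continuous_on)
  moreover have "\<phi> b - \<phi> a - 0 * (b - a) = H b - H a + 2 * (F a * G b - G a * F b)"
    by (simp add: \<phi>_def algebra_simps)
  moreover have "4 * B * \<eta> * \<bar>b - a\<bar> * \<bar>b - a\<bar> = 4 * B * \<eta> * (b - a)^2"
    by (simp add: power2_eq_square)
  ultimately show ?thesis by simp
qed

lemma whitney_horizontal_if_C1:
  assumes F: "\<And>t. (F has_real_derivative F' t) (at t)" "continuous_on UNIV F'"
    and G: "\<And>t. (G has_real_derivative G' t) (at t)" "continuous_on UNIV G'"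
    and H: "\<And>t. (H has_real_derivative 2 * (F' t * G t - F t * G' t)) (at t)"
    and "compact K"
  shows "whitney_horizontal K F G H F' G'"
  unfolding whitney_horizontal_def
proof (intro allI impI)
  fix \<epsilon> :: real assume "\<epsilon> > 0"
  obtain R where R: "K \<subseteq> {-R..R}"
    using compact_imp_bounded[OF \<open>compact K\<close>] bounded_subset_cbox_symmetric by (metis cbox_interval)
  have "continuous_on {-R..R} F'" "continuous_on {-R..R} G'"
    using F(2) G(2) by (auto intro: continuous_on_subset)
  then have "bounded ((\<lambda>x. \<bar>F' x\<bar> + \<bar>G' x\<bar>) ` {-R..R})"
    by (intro compact_imp_bounded compact_continuous_image continuous_intros) auto
  then obtain B where "B > 0" and "\<forall>y\<in>(\<lambda>x. \<bar>F' x\<bar> + \<bar>G' x\<bar>) ` {-R..R}. norm y \<le> B"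
    unfolding bounded_pos by blast
  then have "\<bar>F' x\<bar> + \<bar>G' x\<bar> \<le> B" if "x \<in> {-R..R}" for x
    using that by simp
  then have B: "\<And>x. x \<in> {-R..R} \<Longrightarrow> \<bar>F' x\<bar> \<le> B \<and> \<bar>G' x\<bar> \<le> B"
    by (smt (verit) abs_ge_zero)
  define \<eta> where "\<eta> = \<epsilon> / (4 * B + 1)"
  have "\<eta> > 0" "\<eta> \<le> \<epsilon>" "4 * B * \<eta> \<le> \<epsilon>"
    using \<open>\<epsilon> > 0\<close> \<open>B > 0\<close> by (auto simp: \<eta>_def field_simps)
  obtain \<delta>F where "\<delta>F > 0" and \<delta>F: "\<And>a b. a \<in> {-R..R} \<Longrightarrow> b \<in> {-R..R} \<Longrightarrow> \<bar>b - a\<bar> < \<delta>F \<Longrightarrow>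
      \<bar>F b - F a - F' a * (b - a)\<bar> \<le> \<eta> * \<bar>b - a\<bar>"
    using uniform_linearization[OF F \<open>\<eta> > 0\<close>] by blast
  obtain \<delta>G where "\<delta>G > 0" and \<delta>G: "\<And>a b. a \<in> {-R..R} \<Longrightarrow> b \<in> {-R..R} \<Longrightarrow> \<bar>b - a\<bar> < \<delta>G \<Longrightarrow>
      \<bar>G b - G a - G' a * (b - a)\<bar> \<le> \<eta> * \<bar>b - a\<bar>"
    using uniform_linearization[OF G \<open>\<eta> > 0\<close>] by blast
  have "\<bar>F b - F a - F' a * (b - a)\<bar> \<le> \<epsilon> * \<bar>b - a\<bar> \<and> \<bar>G b - G a - G' a * (b - a)\<bar> \<le> \<epsilon> * \<bar>b - a\<bar> \<and>
      \<bar>H b - H a + 2 * (F a * G b - G a * F b)\<bar> \<le> \<epsilon> * (b - a)^2"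
    if "a \<in> K" "b \<in> K" "\<bar>b - a\<bar> < min \<delta>F \<delta>G" for a b
  proof (intro conjI)
    have ab: "a \<in> {-R..R}" "b \<in> {-R..R}" using that R by auto
    have "\<eta> * \<bar>b - a\<bar> \<le> \<epsilon> * \<bar>b - a\<bar>" using \<open>\<eta> \<le> \<epsilon>\<close> by (simp add: mult_right_mono)
    then show "\<bar>F b - F a - F' a * (b - a)\<bar> \<le> \<epsilon> * \<bar>b - a\<bar>" "\<bar>G b - G a - G' a * (b - a)\<bar> \<le> \<epsilon> * \<bar>b - a\<bar>"
      using \<delta>F[OF ab] \<delta>G[OF ab] that(3) by auto
    have segment: "t \<in> {-R..R}" "\<bar>a - t\<bar> \<le> \<bar>b - a\<bar>" if "t \<in> closed_segment a b" for t
      using that ab closed_segment_subset[of a "{-R..R}" b] dist_in_closed_segment[OF that]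
      by (auto simp: dist_real_def)
    have "\<bar>H b - H a + 2 * (F a * G b - G a * F b)\<bar> \<le> 4 * B * \<eta> * (b - a)^2"
    proof (rule horizontal_lift_defect_le[OF F(1) G(1) H])
      fix t assume t: "t \<in> closed_segment a b"
      show "\<bar>F' t\<bar> \<le> B \<and> \<bar>G' t\<bar> \<le> B" using B segment(1)[OF t] by blast
      have "\<eta> * \<bar>a - t\<bar> \<le> \<eta> * \<bar>b - a\<bar>" using segment(2)[OF t] \<open>\<eta> > 0\<close> by simp
      with \<delta>F[OF segment(1)[OF t] ab(1)] \<delta>G[OF segment(1)[OF t] ab(1)] segment(2)[OF t] that(3)
      show "\<bar>F a - F t - F' t * (a - t)\<bar> \<le> \<eta> * \<bar>b - a\<bar> \<and> \<bar>G a - G t - G' t * (a - t)\<bar> \<le> \<eta> * \<bar>b - a\<bar>"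
        by auto
    qed
    also have "\<dots> \<le> \<epsilon> * (b - a)^2"
      using mult_right_mono[OF \<open>4 * B * \<eta> \<le> \<epsilon>\<close> zero_le_power2[of "b - a"]] .
    finally show "\<bar>H b - H a + 2 * (F a * G b - G a * F b)\<bar> \<le> \<epsilon> * (b - a)^2" .
  qed
  moreover have "min \<delta>F \<delta>G > 0" using \<open>\<delta>F > 0\<close> \<open>\<delta>G > 0\<close> by simp
  ultimately show "\<exists>\<delta>>0. \<forall>a\<in>K. \<forall>b\<in>K. \<bar>b - a\<bar> < \<delta> \<longrightarrow>
      \<bar>F b - F a - F' a * (b - a)\<bar> \<le> \<epsilon> * \<bar>b - a\<bar> \<and> \<bar>G b - G a - G' a * (b - a)\<bar> \<le> \<epsilon> * \<bar>b - a\<bar> \<and>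
      \<bar>H b - H a + 2 * (F a * G b - G a * F b)\<bar> \<le> \<epsilon> * (b - a)^2"
    by blast
qed

lemma whitney_horizontal_velocity_close:
  assumes "whitney_horizontal K f g h u v" "\<epsilon> > 0"
  obtains \<delta> where "\<delta> > 0"
    and "\<And>a b. a \<in> K \<Longrightarrow> b \<in> K \<Longrightarrow> \<bar>b - a\<bar> < \<delta> \<Longrightarrow>
      \<bar>f b - f a - u a * (b - a)\<bar> \<le> \<epsilon> * \<bar>b - a\<bar> \<and> \<bar>g b - g a - v a * (b - a)\<bar> \<le> \<epsilon> * \<bar>b - a\<bar> \<and>
      \<bar>h b - h a + 2 * (f a * g b - g a * f b)\<bar> \<le> \<epsilon> * (b - a)^2 \<and>
      \<bar>u a - u b\<bar> \<le> 2 * \<epsilon> \<and> \<bar>v a - v b\<bar> \<le> 2 * \<epsilon>"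
proof -
  obtain \<delta> where "\<delta> > 0" and \<delta>: "\<And>a b. a \<in> K \<Longrightarrow> b \<in> K \<Longrightarrow> \<bar>b - a\<bar> < \<delta> \<Longrightarrow>
      \<bar>f b - f a - u a * (b - a)\<bar> \<le> \<epsilon> * \<bar>b - a\<bar> \<and> \<bar>g b - g a - v a * (b - a)\<bar> \<le> \<epsilon> * \<bar>b - a\<bar> \<and>
      \<bar>h b - h a + 2 * (f a * g b - g a * f b)\<bar> \<le> \<epsilon> * (b - a)^2"
    using whitney_horizontalD[OF assms] by blast
  have close: "\<bar>w a - w b\<bar> \<le> 2 * \<epsilon>"
    if "\<bar>F b - F a - w a * (b - a)\<bar> \<le> \<epsilon> * \<bar>b - a\<bar>" "\<bar>F a - F b - w b * (a - b)\<bar> \<le> \<epsilon> * \<bar>a - b\<bar>"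
    for F w :: "real \<Rightarrow> real" and a b
  proof (cases "a = b")
    case False
    have "(w a - w b) * (b - a) = - (F b - F a - w a * (b - a)) - (F a - F b - w b * (a - b))"
      by (simp add: algebra_simps)
    then have "\<bar>(w a - w b) * (b - a)\<bar> \<le> \<bar>F b - F a - w a * (b - a)\<bar> + \<bar>F a - F b - w b * (a - b)\<bar>"
      by arith
    also have "\<dots> \<le> (2 * \<epsilon>) * \<bar>b - a\<bar>"
      using that by (simp add: abs_minus_commute[of a b])
    finally show ?thesis using False by (simp add: abs_mult)
  qed (use \<open>\<epsilon> > 0\<close> in simp)
  have "\<bar>u a - u b\<bar> \<le> 2 * \<epsilon> \<and> \<bar>v a - v b\<bar> \<le> 2 * \<epsilon>"
    if "a \<in> K" "b \<in> K" "\<bar>b - a\<bar> < \<delta>" for a b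
  proof -
    have "\<bar>a - b\<bar> < \<delta>" using that(3) by (simp add: abs_minus_commute)
    with \<delta>[OF that] \<delta>[OF that(2,1)] show ?thesis
      using close[of f b a u] close[of g b a v] by blast
  qed
  with \<delta> \<open>\<delta> > 0\<close> show ?thesis using that by blast
qed

lemma whitney_horizontal_lift_estimate:
  assumes "whitney_horizontal K f g h u v" "c \<in> K" "\<epsilon> > 0"
  shows "\<exists>\<delta>>0. \<forall>a\<in>K. \<bar>a - c\<bar> < \<delta> \<longrightarrow>
    \<bar>h a - h c - 2 * (u c * g c - f c * v c) * (a - c)\<bar> \<le> \<epsilon> * \<bar>a - c\<bar>"
proof -
  define B where "B = 1 + 2 * \<bar>f c\<bar> + 2 * \<bar>g c\<bar>"
  have "B > 0" by (simp add: B_def add_pos_nonneg)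
  define \<eta> where "\<eta> = \<epsilon> / B"
  have "\<eta> > 0" using \<open>\<epsilon> > 0\<close> \<open>B > 0\<close> by (simp add: \<eta>_def)
  then obtain \<delta> where "\<delta> > 0" and \<delta>: "\<And>a b. a \<in> K \<Longrightarrow> b \<in> K \<Longrightarrow> \<bar>b - a\<bar> < \<delta> \<Longrightarrow>
      \<bar>f b - f a - u a * (b - a)\<bar> \<le> \<eta> * \<bar>b - a\<bar> \<and> \<bar>g b - g a - v a * (b - a)\<bar> \<le> \<eta> * \<bar>b - a\<bar> \<and>
      \<bar>h b - h a + 2 * (f a * g b - g a * f b)\<bar> \<le> \<eta> * (b - a)^2"
    using whitney_horizontalD[OF assms(1)] by blast
  have "\<bar>h a - h c - 2 * (u c * g c - f c * v c) * (a - c)\<bar> \<le> \<epsilon> * \<bar>a - c\<bar>"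
    if "a \<in> K" "\<bar>a - c\<bar> < min \<delta> 1" for a
  proof -
    define r1 where "r1 = f a - f c - u c * (a - c)"
    define r2 where "r2 = g a - g c - v c * (a - c)"
    define r3 where "r3 = h a - h c + 2 * (f c * g a - g c * f a)"
    have "\<bar>a - c\<bar> < \<delta>" using that(2) by simp
    from \<delta>[OF \<open>c \<in> K\<close> that(1) this]
    have r: "\<bar>r1\<bar> \<le> \<eta> * \<bar>a - c\<bar>" "\<bar>r2\<bar> \<le> \<eta> * \<bar>a - c\<bar>" "\<bar>r3\<bar> \<le> \<eta> * (a - c)^2"
      unfolding r1_def r2_def r3_def by auto
    have "\<bar>a - c\<bar> * \<bar>a - c\<bar> \<le> 1 * \<bar>a - c\<bar>"
      using that(2) by (intro mult_right_mono) auto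
    then have "(a - c)^2 \<le> \<bar>a - c\<bar>" by (simp add: power2_eq_square)
    then have r3: "\<bar>r3\<bar> \<le> \<eta> * \<bar>a - c\<bar>"
      using r(3) mult_left_mono[of "(a - c)^2" "\<bar>a - c\<bar>" \<eta>] \<open>\<eta> > 0\<close> by linarith
    have "h a - h c - 2 * (u c * g c - f c * v c) * (a - c) = r3 + 2 * g c * r1 - 2 * f c * r2"
      by (simp add: r1_def r2_def r3_def algebra_simps)
    also have "\<bar>\<dots>\<bar> \<le> \<bar>r3\<bar> + 2 * \<bar>g c\<bar> * \<bar>r1\<bar> + 2 * \<bar>f c\<bar> * \<bar>r2\<bar>"
      using abs_triangle_ineq4[of "r3 + 2 * g c * r1" "2 * f c * r2"]
        abs_triangle_ineq[of r3 "2 * g c * r1"] by (simp add: abs_mult)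
    also have "\<dots> \<le> \<eta> * \<bar>a - c\<bar> + 2 * \<bar>g c\<bar> * (\<eta> * \<bar>a - c\<bar>) + 2 * \<bar>f c\<bar> * (\<eta> * \<bar>a - c\<bar>)"
      using r r3 by (intro add_mono mult_left_mono) auto
    also have "\<dots> = \<eta> * B * \<bar>a - c\<bar>"
      by (simp add: B_def algebra_simps)
    also have "\<dots> = \<epsilon> * \<bar>a - c\<bar>"
      using \<open>B > 0\<close> by (simp add: \<eta>_def)
    finally show ?thesis .
  qed
  then show ?thesis using \<open>\<delta> > 0\<close> by (intro exI[of _ "min \<delta> 1"]) auto
qed

definition hermite :: "real \<Rightarrow> real \<Rightarrow> real \<Rightarrow> real \<Rightarrow> real" where
  "hermite X u v s = X * (3 * s^2 - 2 * s^3) + u * (s - 2 * s^2 + s^3) + v * (s^3 - s^2)"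

definition hermite_deriv :: "real \<Rightarrow> real \<Rightarrow> real \<Rightarrow> real \<Rightarrow> real" where
  "hermite_deriv X u v s = X * (6 * s - 6 * s^2) + u * (1 - 4 * s + 3 * s^2) + v * (3 * s^2 - 2 * s)"

lemma has_real_derivative_hermite:
  "(hermite X u v has_real_derivative hermite_deriv X u v s) (at s within S)"
  unfolding hermite_def[abs_def] hermite_deriv_def
  by (rule derivative_eq_intros refl)+ (simp add: power2_eq_square power3_eq_cube algebra_simps)

lemma hermite_endpoints:
  "hermite X u v 0 = 0" "hermite X u v 1 = X" "hermite_deriv X u v 0 = u" "hermite_deriv X u v 1 = v"
  by (simp_all add: hermite_def hermite_deriv_def)

lemma hermite_minus_linear:
  "hermite X u v s - r * s = hermite (X - r) (u - r) (v - r) s"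
  "hermite_deriv X u v s - r = hermite_deriv (X - r) (u - r) (v - r) s"
  by (simp_all add: hermite_def hermite_deriv_def algebra_simps)

lemma abs_hermite_le:
  assumes "s \<in> {0..1}"
  shows "\<bar>hermite X u v s\<bar> \<le> \<bar>X\<bar> + \<bar>u\<bar> + \<bar>v\<bar>"
    and "\<bar>hermite_deriv X u v s\<bar> \<le> 3 * (\<bar>X\<bar> + \<bar>u\<bar> + \<bar>v\<bar>)"
proof -
  have s: "0 \<le> s" "s \<le> 1" "0 \<le> s^2" "s^2 \<le> s" "0 \<le> s^3" "s^3 \<le> s^2"
    using assms by (auto simp: power2_eq_square power3_eq_cube mult_le_one intro: mult_left_le)
  have "\<bar>3 * s^2 - 2 * s^3\<bar> \<le> 1"
  proof -
    have "1 - (3 * s^2 - 2 * s^3) = (1 - s)^2 * (1 + 2 * s)"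
      by (simp add: power2_eq_square power3_eq_cube algebra_simps)
    then show ?thesis using s by (simp add: abs_le_iff) (smt (verit) zero_le_mult_iff zero_le_power2)
  qed
  moreover have "\<bar>s - 2 * s^2 + s^3\<bar> \<le> 1" "\<bar>s^3 - s^2\<bar> \<le> 1"
  proof -
    have "(1 - s)^2 \<le> 1" using s by (intro power_le_one) auto
    with s have bound: "s * (1 - s)^2 \<le> 1 * 1" by (intro mult_mono) auto
    have "s - 2 * s^2 + s^3 = s * (1 - s)^2"
      by (simp add: power2_eq_square power3_eq_cube algebra_simps)
    moreover have "0 \<le> s * (1 - s)^2" using s by simp
    ultimately show "\<bar>s - 2 * s^2 + s^3\<bar> \<le> 1" using bound unfolding abs_le_iff by linarith
    show "\<bar>s^3 - s^2\<bar> \<le> 1" using s unfolding abs_le_iff by linarith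
  qed
  moreover have "\<bar>6 * s - 6 * s^2\<bar> \<le> 3" "\<bar>1 - 4 * s + 3 * s^2\<bar> \<le> 3" "\<bar>3 * s^2 - 2 * s\<bar> \<le> 3"
  proof -
    have "0 \<le> (2 * s - 1)^2" by simp
    then have "s - s^2 \<le> 1 / 4" by (simp add: power2_eq_square algebra_simps)
    with s show "\<bar>6 * s - 6 * s^2\<bar> \<le> 3" "\<bar>1 - 4 * s + 3 * s^2\<bar> \<le> 3" "\<bar>3 * s^2 - 2 * s\<bar> \<le> 3"
      unfolding abs_le_iff by linarith+
  qed
  moreover have "\<bar>X * p1 + u * p2 + v * p3\<bar> \<le> B * (\<bar>X\<bar> + \<bar>u\<bar> + \<bar>v\<bar>)"
    if "\<bar>p1\<bar> \<le> B" "\<bar>p2\<bar> \<le> B" "\<bar>p3\<bar> \<le> B" for p1 p2 p3 B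
  proof -
    have "\<bar>X * p1\<bar> \<le> B * \<bar>X\<bar>" "\<bar>u * p2\<bar> \<le> B * \<bar>u\<bar>" "\<bar>v * p3\<bar> \<le> B * \<bar>v\<bar>"
      using that by (simp_all add: abs_mult mult.commute[of B] mult_left_mono)
    then show ?thesis
      using abs_triangle_ineq[of "X * p1" "u * p2"] abs_triangle_ineq[of "X * p1 + u * p2" "v * p3"]
      unfolding distrib_left by linarith
  qed
  ultimately show "\<bar>hermite X u v s\<bar> \<le> \<bar>X\<bar> + \<bar>u\<bar> + \<bar>v\<bar>"
    and "\<bar>hermite_deriv X u v s\<bar> \<le> 3 * (\<bar>X\<bar> + \<bar>u\<bar> + \<bar>v\<bar>)"
    unfolding hermite_def hermite_deriv_def by (metis mult_1)+
qed

text \<open>The profiles are Hermite interpolants plus multiples of two bumps that vanish to second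
  order at both ends. The bumps are chosen so that their Wronskian-type combination
  \<open>b\<^sub>x' b\<^sub>y - b\<^sub>x b\<^sub>y'\<close> equals \<open>-b\<^sub>x\<^sup>2\<close>: this makes the area below quadratic in a
  joint correction with a leading coefficient of fixed sign.\<close>

definition profile_x :: "real \<Rightarrow> real \<Rightarrow> real \<Rightarrow> real \<Rightarrow> real \<Rightarrow> real" where
  "profile_x X u v c s = hermite X u v s + c * (s^2 * (1 - s)^2)"

definition profile_x_deriv :: "real \<Rightarrow> real \<Rightarrow> real \<Rightarrow> real \<Rightarrow> real \<Rightarrow> real" where
  "profile_x_deriv X u v c s = hermite_deriv X u v s + c * (2 * s * (1 - s) * (1 - 2 * s))"

definition profile_y :: "real \<Rightarrow> real \<Rightarrow> real \<Rightarrow> real \<Rightarrow> real \<Rightarrow> real" where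
  "profile_y X u v c s = hermite X u v s + c * (s^3 * (1 - s)^2)"

definition profile_y_deriv :: "real \<Rightarrow> real \<Rightarrow> real \<Rightarrow> real \<Rightarrow> real \<Rightarrow> real" where
  "profile_y_deriv X u v c s = hermite_deriv X u v s + c * (s^2 * (1 - s) * (3 - 5 * s))"

lemma has_real_derivative_profile:
  "(profile_x X u v c has_real_derivative profile_x_deriv X u v c s) (at s within S)"
  "(profile_y X u v c has_real_derivative profile_y_deriv X u v c s) (at s within S)"
  unfolding profile_x_def[abs_def] profile_x_deriv_def profile_y_def[abs_def] profile_y_deriv_def
  by (rule derivative_eq_intros has_real_derivative_hermite refl
      | simp add: power2_eq_square power3_eq_cube algebra_simps)+

lemma continuous_on_profile [continuous_intros]:
  "continuous_on S (profile_x X u v c)" "continuous_on S (profile_x_deriv X u v c)"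
  "continuous_on S (profile_y X u v c)" "continuous_on S (profile_y_deriv X u v c)"
  unfolding profile_x_def[abs_def] profile_x_deriv_def[abs_def] profile_y_def[abs_def]
    profile_y_deriv_def[abs_def] hermite_def hermite_deriv_def
  by (intro continuous_intros)+

lemma profile_endpoints:
  "profile_x X u v c 0 = 0" "profile_x X u v c 1 = X"
  "profile_x_deriv X u v c 0 = u" "profile_x_deriv X u v c 1 = v"
  "profile_y X u v c 0 = 0" "profile_y X u v c 1 = X"
  "profile_y_deriv X u v c 0 = u" "profile_y_deriv X u v c 1 = v"
  by (simp_all add: profile_x_def profile_x_deriv_def profile_y_def profile_y_deriv_def
      hermite_endpoints)

lemma abs_profile_deriv_minus_le:
  assumes "s \<in> {0..1}"
  shows "\<bar>profile_x_deriv X u v c s - r\<bar> \<le> 3 * (\<bar>X - r\<bar> + \<bar>u - r\<bar> + \<bar>v - r\<bar> + \<bar>c\<bar>)"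
    and "\<bar>profile_y_deriv X u v c s - r\<bar> \<le> 3 * (\<bar>X - r\<bar> + \<bar>u - r\<bar> + \<bar>v - r\<bar> + \<bar>c\<bar>)"
proof -
  have "\<bar>2 * s * (1 - s) * (1 - 2 * s)\<bar> \<le> 3" "\<bar>s^2 * (1 - s) * (3 - 5 * s)\<bar> \<le> 3"
  proof -
    have s: "0 \<le> s" "s \<le> 1" "0 \<le> s^2" "s^2 \<le> 1"
      using assms by (auto simp: power_le_one)
    have "\<bar>2 * s * (1 - s) * (1 - 2 * s)\<bar> = 2 * (s * ((1 - s) * \<bar>1 - 2 * s\<bar>))"
      using s by (simp add: abs_mult)
    also have "\<dots> \<le> 2 * (1 * (1 * 1))"
      using s by (intro mult_left_mono mult_mono) auto
    finally show "\<bar>2 * s * (1 - s) * (1 - 2 * s)\<bar> \<le> 3" by simp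
    have "\<bar>s^2 * (1 - s) * (3 - 5 * s)\<bar> = s^2 * ((1 - s) * \<bar>3 - 5 * s\<bar>)"
      using s by (simp add: abs_mult)
    also have "\<dots> \<le> 1 * (1 * 3)"
      using s by (intro mult_mono) auto
    finally show "\<bar>s^2 * (1 - s) * (3 - 5 * s)\<bar> \<le> 3" by simp
  qed
  moreover have "\<bar>hermite_deriv X u v s + c * w - r\<bar> \<le> 3 * (\<bar>X - r\<bar> + \<bar>u - r\<bar> + \<bar>v - r\<bar> + \<bar>c\<bar>)"
    if "\<bar>w\<bar> \<le> 3" for w
  proof -
    have "\<bar>c * w\<bar> \<le> 3 * \<bar>c\<bar>"
      using that by (simp add: abs_mult mult.commute mult_left_mono)
    moreover have "\<bar>hermite_deriv X u v s - r\<bar> \<le> 3 * (\<bar>X - r\<bar> + \<bar>u - r\<bar> + \<bar>v - r\<bar>)"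
      unfolding hermite_minus_linear(2) by (rule abs_hermite_le(2)[OF assms])
    ultimately show ?thesis
      using abs_triangle_ineq[of "hermite_deriv X u v s - r" "c * w"] by (smt (verit))
  qed
  ultimately show "\<bar>profile_x_deriv X u v c s - r\<bar> \<le> 3 * (\<bar>X - r\<bar> + \<bar>u - r\<bar> + \<bar>v - r\<bar> + \<bar>c\<bar>)"
    and "\<bar>profile_y_deriv X u v c s - r\<bar> \<le> 3 * (\<bar>X - r\<bar> + \<bar>u - r\<bar> + \<bar>v - r\<bar> + \<bar>c\<bar>)"
    unfolding profile_x_deriv_def profile_y_deriv_def by blast+
qed

definition lift_density ::
    "real \<Rightarrow> real \<Rightarrow> real \<Rightarrow> real \<Rightarrow> real \<Rightarrow> real \<Rightarrow> real \<Rightarrow> real \<Rightarrow> real \<Rightarrow> real" where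
  "lift_density X1 u1 v1 c1 X2 u2 v2 c2 s =
     profile_x_deriv X1 u1 v1 c1 s * profile_y X2 u2 v2 c2 s -
     profile_x X1 u1 v1 c1 s * profile_y_deriv X2 u2 v2 c2 s"

definition profile_area ::
    "real \<Rightarrow> real \<Rightarrow> real \<Rightarrow> real \<Rightarrow> real \<Rightarrow> real \<Rightarrow> real \<Rightarrow> real \<Rightarrow> real" where
  "profile_area X1 u1 v1 c1 X2 u2 v2 c2 = 2 * integral {0..1} (lift_density X1 u1 v1 c1 X2 u2 v2 c2)"

lemma continuous_on_lift_density [continuous_intros]:
  "continuous_on S (lift_density X1 u1 v1 c1 X2 u2 v2 c2)"
  unfolding lift_density_def[abs_def] by (intro continuous_intros)

lemma integral_bump_squared: "((\<lambda>s::real. (s^2 * (1 - s)^2)^2) has_integral 1 / 630) {0..1}"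
proof -
  define P where "P s = s^5 / 5 - 2 * s^6 / 3 + 6 * s^7 / 7 - s^8 / 2 + s^9 / 9" for s :: real
  have "((\<lambda>s. (s^2 * (1 - s)^2)^2) has_integral P 1 - P 0) {0..1}"
  proof (rule fundamental_theorem_of_calculus)
    fix x :: real
    show "(P has_vector_derivative (x^2 * (1 - x)^2)^2) (at x within {0..1})"
      unfolding P_def has_real_derivative_iff_has_vector_derivative[symmetric]
      by (auto intro!: derivative_eq_intros simp: power2_eq_square power3_eq_cube algebra_simps
          eval_nat_numeral)
  qed simp
  then show ?thesis by (simp add: P_def)
qed

lemma profile_area_quadratic:
  "\<exists>l. \<forall>c. profile_area X1 u1 v1 c X2 u2 v2 (\<sigma> * c) =
     profile_area X1 u1 v1 0 X2 u2 v2 0 + l * c - \<sigma> * c^2 / 315"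
proof -
  define J where "J s = 2 * s * (1 - s) * (1 - 2 * s) * profile_y X2 u2 v2 0 s
      - s^2 * (1 - s)^2 * profile_y_deriv X2 u2 v2 0 s
      + \<sigma> * (profile_x_deriv X1 u1 v1 0 s * (s^3 * (1 - s)^2)
             - profile_x X1 u1 v1 0 s * (s^2 * (1 - s) * (3 - 5 * s)))" for s
  have split: "lift_density X1 u1 v1 c X2 u2 v2 (\<sigma> * c) s =
      lift_density X1 u1 v1 0 X2 u2 v2 0 s + c * J s - \<sigma> * c^2 * (s^2 * (1 - s)^2)^2" for c s
    by (simp add: lift_density_def J_def profile_x_def profile_x_deriv_def profile_y_def
        profile_y_deriv_def power2_eq_square power3_eq_cube algebra_simps)
  have "continuous_on {0..1} J"
    unfolding J_def by (intro continuous_intros)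
  then have "J integrable_on {0..1}" by (rule integrable_continuous_real)
  moreover have "lift_density X1 u1 v1 0 X2 u2 v2 0 integrable_on {0..1}"
    by (intro integrable_continuous_real continuous_intros)
  ultimately have integral_split: "integral {0..1} (lift_density X1 u1 v1 c X2 u2 v2 (\<sigma> * c)) =
      integral {0..1} (lift_density X1 u1 v1 0 X2 u2 v2 0) + c * integral {0..1} J
        - \<sigma> * c^2 * (1 / 630)" for c
    unfolding split
    by (intro integral_unique has_integral_diff has_integral_add has_integral_mult_right
        integrable_integral integral_bump_squared)
  show ?thesis
  proof (rule exI[of _ "2 * integral {0..1} J"], intro allI)
    fix c
    show "profile_area X1 u1 v1 c X2 u2 v2 (\<sigma> * c) =
        profile_area X1 u1 v1 0 X2 u2 v2 0 + 2 * integral {0..1} J * c - \<sigma> * c^2 / 315"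
      unfolding profile_area_def integral_split by (simp add: algebra_simps)
  qed
qed

lemma exists_area_correction:
  obtains c1 c2 where "profile_area X1 u1 v1 c1 X2 u2 v2 c2 = Z"
    and "\<bar>c1\<bar> \<le> sqrt (315 * \<bar>Z - profile_area X1 u1 v1 0 X2 u2 v2 0\<bar>)"
    and "\<bar>c2\<bar> \<le> sqrt (315 * \<bar>Z - profile_area X1 u1 v1 0 X2 u2 v2 0\<bar>)"
proof -
  define D where "D = Z - profile_area X1 u1 v1 0 X2 u2 v2 0"
  define \<sigma> :: real where "\<sigma> = (if D \<ge> 0 then -1 else 1)"
  define C where "C = sqrt (315 * \<bar>D\<bar>)"
  obtain l where l: "\<And>c. profile_area X1 u1 v1 c X2 u2 v2 (\<sigma> * c) =
      profile_area X1 u1 v1 0 X2 u2 v2 0 + l * c - \<sigma> * c^2 / 315"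
    using profile_area_quadratic by blast
  define q where "q c = profile_area X1 u1 v1 0 X2 u2 v2 0 + l * c - \<sigma> * c^2 / 315" for c
  have "\<sigma> * C^2 / 315 = - D" by (simp add: C_def \<sigma>_def)
  then have q_ends: "q C = Z + l * C" "q (- C) = Z - l * C"
    by (simp_all add: q_def D_def algebra_simps)
  have "C \<ge> 0" by (simp add: C_def)
  have "continuous_on {-C..C} q" unfolding q_def by (intro continuous_intros) auto
  then obtain c where c: "- C \<le> c" "c \<le> C" "q c = Z"
  proof (cases "l * C \<ge> 0")
    case True
    then have "q (- C) \<le> Z" "Z \<le> q C" using q_ends by auto
    with IVT'[OF this _ \<open>continuous_on {-C..C} q\<close>] \<open>C \<ge> 0\<close> that show ?thesis by auto
  next
    case False
    then have "q C \<le> Z" "Z \<le> q (- C)" using q_ends by auto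
    with IVT2'[OF this _ \<open>continuous_on {-C..C} q\<close>] \<open>C \<ge> 0\<close> that show ?thesis by auto
  qed
  show ?thesis
  proof (rule that)
    show "profile_area X1 u1 v1 c X2 u2 v2 (\<sigma> * c) = Z" using l c q_def by simp
    show "\<bar>c\<bar> \<le> sqrt (315 * \<bar>Z - profile_area X1 u1 v1 0 X2 u2 v2 0\<bar>)"
      "\<bar>\<sigma> * c\<bar> \<le> sqrt (315 * \<bar>Z - profile_area X1 u1 v1 0 X2 u2 v2 0\<bar>)"
      using c by (auto simp: C_def D_def \<sigma>_def abs_mult)
  qed
qed

lemma abs_perturbed_cross_le:
  fixes r1 r2 d1 d2 e1 e2 s E :: real
  assumes "\<bar>d1\<bar> \<le> E" "\<bar>e1\<bar> \<le> E" "\<bar>d2\<bar> \<le> E" "\<bar>e2\<bar> \<le> E" "0 \<le> s" "s \<le> 1"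
  shows "\<bar>(r1 + d1) * (r2 * s + e2) - (r1 * s + e1) * (r2 + d2)\<bar> \<le> 2 * E * (\<bar>r1\<bar> + \<bar>r2\<bar>) + 2 * E^2"
proof -
  have "E \<ge> 0" using assms(1) by simp
  have bounds: "\<bar>r1 * e2\<bar> \<le> \<bar>r1\<bar> * E" "\<bar>e1 * r2\<bar> \<le> E * \<bar>r2\<bar>" "\<bar>d1 * e2\<bar> \<le> E * E"
      "\<bar>e1 * d2\<bar> \<le> E * E"
    using assms \<open>E \<ge> 0\<close> unfolding abs_mult by (auto intro: mult_mono mult_left_mono mult_right_mono)
  have "\<bar>d1 * r2 * s\<bar> \<le> \<bar>d1\<bar> * \<bar>r2\<bar>" "\<bar>r1 * d2 * s\<bar> \<le> \<bar>r1\<bar> * \<bar>d2\<bar>"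
    using assms(5,6) unfolding abs_mult by (auto intro: mult_left_le)
  then have bounds_s: "\<bar>d1 * r2 * s\<bar> \<le> E * \<bar>r2\<bar>" "\<bar>r1 * d2 * s\<bar> \<le> \<bar>r1\<bar> * E"
    using assms(1,3) abs_ge_zero[of r1] abs_ge_zero[of r2]
    by (metis mult_left_mono mult_right_mono order_trans)+
  have triangle: "\<bar>a + b + c - d - e - f\<bar> \<le> \<bar>a\<bar> + \<bar>b\<bar> + \<bar>c\<bar> + \<bar>d\<bar> + \<bar>e\<bar> + \<bar>f\<bar>"
    for a b c d e f :: real
    by linarith
  have "(r1 + d1) * (r2 * s + e2) - (r1 * s + e1) * (r2 + d2) =
      r1 * e2 + d1 * r2 * s + d1 * e2 - r1 * d2 * s - e1 * r2 - e1 * d2"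
    by (simp add: algebra_simps)
  then have "\<bar>(r1 + d1) * (r2 * s + e2) - (r1 * s + e1) * (r2 + d2)\<bar> \<le>
      \<bar>r1 * e2\<bar> + \<bar>d1 * r2 * s\<bar> + \<bar>d1 * e2\<bar> + \<bar>r1 * d2 * s\<bar> + \<bar>e1 * r2\<bar> + \<bar>e1 * d2\<bar>"
    using triangle by presburger
  also have "\<dots> \<le> \<bar>r1\<bar> * E + E * \<bar>r2\<bar> + E * E + \<bar>r1\<bar> * E + E * \<bar>r2\<bar> + E * E"
    using bounds bounds_s by linarith
  also have "\<dots> = 2 * E * (\<bar>r1\<bar> + \<bar>r2\<bar>) + 2 * E^2"
    by (simp add: algebra_simps power2_eq_square)
  finally show ?thesis .
qed

lemma abs_profile_area_le:
  assumes "\<bar>X1 - r1\<bar> \<le> \<eta>" "\<bar>u1 - r1\<bar> \<le> \<eta>" "\<bar>v1 - r1\<bar> \<le> \<eta>"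
    and "\<bar>X2 - r2\<bar> \<le> \<eta>" "\<bar>u2 - r2\<bar> \<le> \<eta>" "\<bar>v2 - r2\<bar> \<le> \<eta>"
  shows "\<bar>profile_area X1 u1 v1 0 X2 u2 v2 0\<bar> \<le> 36 * \<eta> * (\<bar>r1\<bar> + \<bar>r2\<bar>) + 324 * \<eta>^2"
proof -
  define E where "E = 9 * \<eta>"
  have "\<eta> \<ge> 0" using assms(1) by simp
  have pointwise: "norm (lift_density X1 u1 v1 0 X2 u2 v2 0 s) \<le> 2 * E * (\<bar>r1\<bar> + \<bar>r2\<bar>) + 2 * E^2"
    if s: "s \<in> {0..1}" for s
  proof -
    have "\<bar>profile_x_deriv X1 u1 v1 0 s - r1\<bar> \<le> E" "\<bar>profile_y_deriv X2 u2 v2 0 s - r2\<bar> \<le> E"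
      using abs_profile_deriv_minus_le[OF s, of X1 u1 v1 0 r1]
        abs_profile_deriv_minus_le[OF s, of X2 u2 v2 0 r2] assms
      by (simp_all add: E_def)
    moreover have "\<bar>profile_x X1 u1 v1 0 s - r1 * s\<bar> \<le> E" "\<bar>profile_y X2 u2 v2 0 s - r2 * s\<bar> \<le> E"
      using abs_hermite_le(1)[OF s, of "X1 - r1" "u1 - r1" "v1 - r1"]
        abs_hermite_le(1)[OF s, of "X2 - r2" "u2 - r2" "v2 - r2"] assms \<open>\<eta> \<ge> 0\<close>
      by (simp_all add: E_def profile_x_def profile_y_def hermite_minus_linear(1))
    ultimately have "\<bar>(r1 + (profile_x_deriv X1 u1 v1 0 s - r1)) * (r2 * s + (profile_y X2 u2 v2 0 s - r2 * s))
        - (r1 * s + (profile_x X1 u1 v1 0 s - r1 * s)) * (r2 + (profile_y_deriv X2 u2 v2 0 s - r2))\<bar>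
        \<le> 2 * E * (\<bar>r1\<bar> + \<bar>r2\<bar>) + 2 * E^2"
      using s by (intro abs_perturbed_cross_le) auto
    then show ?thesis by (simp add: lift_density_def)
  qed
  have "norm (integral {0..1} (lift_density X1 u1 v1 0 X2 u2 v2 0))
      \<le> (2 * E * (\<bar>r1\<bar> + \<bar>r2\<bar>) + 2 * E^2) * (1 - 0)"
    by (intro integral_bound continuous_intros pointwise) simp_all
  then show ?thesis
    by (simp add: profile_area_def E_def abs_mult power2_eq_square)
qed

lemma small_area_correction:
  assumes "\<epsilon> > 0"
  obtains \<eta> where "\<eta> > 0"
    and "\<And>X1 u1 v1 X2 u2 v2 Z. \<bar>X1 - r1\<bar> \<le> \<eta> \<Longrightarrow> \<bar>u1 - r1\<bar> \<le> \<eta> \<Longrightarrow> \<bar>v1 - r1\<bar> \<le> \<eta> \<Longrightarrow>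
      \<bar>X2 - r2\<bar> \<le> \<eta> \<Longrightarrow> \<bar>u2 - r2\<bar> \<le> \<eta> \<Longrightarrow> \<bar>v2 - r2\<bar> \<le> \<eta> \<Longrightarrow> \<bar>Z\<bar> \<le> \<eta> \<Longrightarrow>
      sqrt (315 * \<bar>Z - profile_area X1 u1 v1 0 X2 u2 v2 0\<bar>) \<le> \<epsilon>"
proof -
  define C where "C = 315 * (325 + 36 * (\<bar>r1\<bar> + \<bar>r2\<bar>))"
  have "C > 0" by (simp add: C_def add_pos_nonneg)
  define \<eta> where "\<eta> = min 1 (\<epsilon>^2 / C)"
  have "\<eta> > 0" "\<eta> \<le> 1" "\<eta> * C \<le> \<epsilon>^2"
    using \<open>\<epsilon> > 0\<close> \<open>C > 0\<close> by (auto simp: \<eta>_def min_def field_simps)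
  show ?thesis
  proof (rule that[OF \<open>\<eta> > 0\<close>])
    fix X1 u1 v1 X2 u2 v2 Z
    assume data: "\<bar>X1 - r1\<bar> \<le> \<eta>" "\<bar>u1 - r1\<bar> \<le> \<eta>" "\<bar>v1 - r1\<bar> \<le> \<eta>"
      "\<bar>X2 - r2\<bar> \<le> \<eta>" "\<bar>u2 - r2\<bar> \<le> \<eta>" "\<bar>v2 - r2\<bar> \<le> \<eta>" and "\<bar>Z\<bar> \<le> \<eta>"
    have "\<eta>^2 \<le> \<eta>" using \<open>\<eta> > 0\<close> \<open>\<eta> \<le> 1\<close> by (simp add: power2_eq_square mult_left_le)
    then have "\<bar>Z - profile_area X1 u1 v1 0 X2 u2 v2 0\<bar> \<le> \<eta> + 36 * \<eta> * (\<bar>r1\<bar> + \<bar>r2\<bar>) + 324 * \<eta>"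
      using abs_profile_area_le[OF data] \<open>\<bar>Z\<bar> \<le> \<eta>\<close> by linarith
    then have "315 * \<bar>Z - profile_area X1 u1 v1 0 X2 u2 v2 0\<bar> \<le> \<eta> * C"
      by (simp add: C_def algebra_simps)
    also have "\<dots> \<le> \<epsilon>^2" by fact
    finally show "sqrt (315 * \<bar>Z - profile_area X1 u1 v1 0 X2 u2 v2 0\<bar>) \<le> \<epsilon>"
      using \<open>\<epsilon> > 0\<close> real_le_lsqrt by (simp add: real_sqrt_le_iff) 
  qed
qed

locale horizontal_whitney_data =
  fixes K :: "real set" and f g h u v :: "real \<Rightarrow> real"
  assumes compact_K: "compact K" and K_nonempty: "K \<noteq> {}"
    and whitney: "whitney_horizontal K f g h u v"
begin

definition kmin :: real where "kmin = Inf K"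
definition kmax :: real where "kmax = Sup K"

lemma kmin_kmax: "kmin \<in> K" "kmax \<in> K" "x \<in> K \<Longrightarrow> kmin \<le> x" "x \<in> K \<Longrightarrow> x \<le> kmax"
proof -
  have "closed K" "bdd_below K" "bdd_above K"
    using compact_K by (auto intro: compact_imp_closed bounded_imp_bdd_below bounded_imp_bdd_above
        compact_imp_bounded)
  then show "kmin \<in> K" "kmax \<in> K" "x \<in> K \<Longrightarrow> kmin \<le> x" "x \<in> K \<Longrightarrow> x \<le> kmax"
    unfolding kmin_def kmax_def using K_nonempty
    by (auto intro: closed_contains_Inf closed_contains_Sup cInf_lower cSup_upper)
qed

definition left_pt :: "real \<Rightarrow> real" where "left_pt t = Sup (K \<inter> {..t})"
definition right_pt :: "real \<Rightarrow> real" where "right_pt t = Inf (K \<inter> {t..})"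

lemma left_pt:
  assumes "kmin \<le> t"
  shows "left_pt t \<in> K" "left_pt t \<le> t" "x \<in> K \<Longrightarrow> x \<le> t \<Longrightarrow> x \<le> left_pt t"
proof -
  have "K \<inter> {..t} \<noteq> {}" using kmin_kmax(1) assms by auto
  moreover have "closed (K \<inter> {..t})" using compact_K by (intro closed_Int compact_imp_closed) auto
  ultimately have "left_pt t \<in> K \<inter> {..t}"
    unfolding left_pt_def by (intro closed_contains_Sup) auto
  then show "left_pt t \<in> K" "left_pt t \<le> t" by auto
  show "x \<in> K \<Longrightarrow> x \<le> t \<Longrightarrow> x \<le> left_pt t" unfolding left_pt_def by (rule cSup_upper) auto
qed

lemma right_pt:
  assumes "t \<le> kmax"
  shows "right_pt t \<in> K" "t \<le> right_pt t" "x \<in> K \<Longrightarrow> t \<le> x \<Longrightarrow> right_pt t \<le> x"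
proof -
  have "K \<inter> {t..} \<noteq> {}" using kmin_kmax(2) assms by auto
  moreover have "closed (K \<inter> {t..})" using compact_K by (intro closed_Int compact_imp_closed) auto
  ultimately have "right_pt t \<in> K \<inter> {t..}"
    unfolding right_pt_def by (intro closed_contains_Inf) auto
  then show "right_pt t \<in> K" "t \<le> right_pt t" by auto
  show "x \<in> K \<Longrightarrow> t \<le> x \<Longrightarrow> right_pt t \<le> x" unfolding right_pt_def by (rule cInf_lower) auto
qed

definition gap :: "real \<Rightarrow> real \<Rightarrow> bool" where
  "gap a b \<longleftrightarrow> a \<in> K \<and> b \<in> K \<and> a < b \<and> {a<..<b} \<inter> K = {}"

lemma gap_around:
  assumes "kmin \<le> t" "t \<le> kmax" "t \<notin> K"
  shows "gap (left_pt t) (right_pt t)" "left_pt t < t" "t < right_pt t"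
proof -
  show "left_pt t < t" "t < right_pt t"
    using left_pt(1,2)[OF assms(1)] right_pt(1,2)[OF assms(2)] assms(3) by (auto simp: order_le_less)
  moreover have "x \<notin> K" if "left_pt t < x" "x < right_pt t" for x
    using that left_pt(3)[OF assms(1), of x] right_pt(3)[OF assms(2), of x] by force
  ultimately show "gap (left_pt t) (right_pt t)"
    unfolding gap_def using left_pt(1)[OF assms(1)] right_pt(1)[OF assms(2)] by auto
qed

lemma gap_pts_eq:
  assumes "gap a b" "a < t" "t < b"
  shows "left_pt t = a" "right_pt t = b"
proof -
  have K: "a \<in> K" "b \<in> K" "\<And>x. a < x \<Longrightarrow> x < b \<Longrightarrow> x \<notin> K"
    using assms(1) unfolding gap_def by auto
  then have t: "kmin \<le> t" "t \<le> kmax" using kmin_kmax(3,4) assms(2,3) by force+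
  have "a \<le> left_pt t" "\<not> a < left_pt t"
    using left_pt[OF t(1)] K assms(2,3) by fastforce+
  then show "left_pt t = a" by simp
  have "right_pt t \<le> b" "\<not> right_pt t < b"
    using right_pt[OF t(2)] K assms(2,3) by fastforce+
  then show "right_pt t = b" by simp
qed

lemma notin_K_cases:
  assumes "t \<notin> K"
  obtains "t < kmin" | "kmax < t" | "gap (left_pt t) (right_pt t)" "left_pt t < t" "t < right_pt t"
  using gap_around[OF _ _ assms] by (meson linorder_not_le)

definition glue :: "(real \<Rightarrow> real) \<Rightarrow> (real \<Rightarrow> real \<Rightarrow> real) \<Rightarrow> (real \<Rightarrow> real \<Rightarrow> real \<Rightarrow> real) \<Rightarrow>
    real \<Rightarrow> real" where
  "glue val ray piece t =
     (if t \<in> K then val t else if t < kmin then ray kmin t else if kmax < t then ray kmax t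
      else piece (left_pt t) (right_pt t) t)"

definition glue_compatible ::
    "(real \<Rightarrow> real) \<Rightarrow> (real \<Rightarrow> real \<Rightarrow> real) \<Rightarrow> (real \<Rightarrow> real \<Rightarrow> real \<Rightarrow> real) \<Rightarrow> bool" where
  "glue_compatible val ray piece \<longleftrightarrow>
     (\<forall>c\<in>K. ray c c = val c) \<and> (\<forall>a b. gap a b \<longrightarrow> piece a b a = val a \<and> piece a b b = val b)"

lemma glue_on_K: "t \<in> K \<Longrightarrow> glue val ray piece t = val t"
  by (simp add: glue_def)

lemma glue_below: "t < kmin \<Longrightarrow> glue val ray piece t = ray kmin t"
  using kmin_kmax(3) by (force simp: glue_def)

lemma glue_above: "kmax < t \<Longrightarrow> glue val ray piece t = ray kmax t"
  using kmin_kmax(3,4)[of kmin] kmin_kmax(1,4) by (force simp: glue_def)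

lemma glue_in_gap: "gap a b \<Longrightarrow> a < t \<Longrightarrow> t < b \<Longrightarrow> glue val ray piece t = piece a b t"
  using gap_pts_eq[of a b t] kmin_kmax(3,4) unfolding gap_def glue_def by force

lemma glue_on_closed_piece:
  assumes "glue_compatible val ray piece"
  shows "t \<le> kmin \<Longrightarrow> glue val ray piece t = ray kmin t"
    and "kmax \<le> t \<Longrightarrow> glue val ray piece t = ray kmax t"
    and "gap a b \<Longrightarrow> t \<in> {a..b} \<Longrightarrow> glue val ray piece t = piece a b t"
  using assms kmin_kmax(1,2) glue_below glue_above glue_in_gap[of a b t]
  unfolding glue_compatible_def gap_def by (auto simp: glue_on_K order_le_less)

lemma has_real_derivative_glue_off_K:
  assumes "t \<notin> K"
    and ray: "\<And>c s. (ray c has_real_derivative ray' c s) (at s)"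
    and piece: "\<And>a b s. gap a b \<Longrightarrow> a < s \<Longrightarrow> s < b \<Longrightarrow> (piece a b has_real_derivative piece' a b s) (at s)"
  shows "(glue val ray piece has_real_derivative glue val' ray' piece' t) (at t)"
  using assms(1)
proof (cases rule: notin_K_cases)
  case 1
  then show ?thesis
    using has_field_derivative_transform_within_open[OF ray[of kmin t], where S="{..<kmin}"]
    by (simp add: glue_below)
next
  case 2
  then show ?thesis
    using has_field_derivative_transform_within_open[OF ray[of kmax t], where S="{kmax<..}"]
    by (simp add: glue_above)
next
  case 3
  then show ?thesis
    using has_field_derivative_transform_within_open[OF piece[OF 3], where S="{left_pt t<..<right_pt t}"]
    by (simp add: glue_in_gap)
qed

lemma isCont_glue_off_K:
  assumes "t \<notin> K"
    and ray: "\<And>c s. isCont (ray c) s"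
    and piece: "\<And>a b s. gap a b \<Longrightarrow> a < s \<Longrightarrow> s < b \<Longrightarrow> isCont (piece a b) s"
  shows "isCont (glue val ray piece) t"
proof -
  have *: "isCont (glue val ray piece) t" if "open S" "t \<in> S" "\<And>x. x \<in> S \<Longrightarrow> glue val ray piece x = m x"
    "isCont m t" for S m
    using isCont_cong[of "glue val ray piece" m t] that eventually_nhds by blast
  from assms(1) show ?thesis
  proof (cases rule: notin_K_cases)
    case 1
    then show ?thesis by (intro *[of "{..<kmin}" "ray kmin"] ray) (auto simp: glue_below)
  next
    case 2
    then show ?thesis by (intro *[of "{kmax<..}" "ray kmax"] ray) (auto simp: glue_above)
  next
    case 3
    then show ?thesis
      by (intro *[of "{left_pt t<..<right_pt t}" "piece (left_pt t) (right_pt t)"] piece) (auto simp: glue_in_gap)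
  qed
qed

lemma segment_to_K:
  assumes "c \<in> K" "t \<notin> K"
  obtains k where "k \<in> K" "k \<in> closed_segment c t" "open_segment k t \<inter> K = {}"
    and "closed_segment k t \<subseteq> {..kmin} \<or> closed_segment k t \<subseteq> {kmax..} \<or>
         (\<exists>a b. gap a b \<and> closed_segment k t \<subseteq> {a..b})"
proof -
  note result = that
  have in_gap: thesis if "gap a b" "a < t" "t < b" "k = a \<or> k = b" "k \<in> closed_segment c t" for a b k
  proof (rule result)
    show "k \<in> K" using \<open>gap a b\<close> \<open>k = a \<or> k = b\<close> by (auto simp: gap_def)
    have "open_segment k t \<subseteq> {a<..<b}"
      using \<open>a < t\<close> \<open>t < b\<close> \<open>k = a \<or> k = b\<close> by (auto simp: open_segment_eq_real_ivl)
    then show "open_segment k t \<inter> K = {}" using \<open>gap a b\<close> by (auto simp: gap_def)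
    have "closed_segment k t \<subseteq> {a..b}"
      using \<open>a < t\<close> \<open>t < b\<close> \<open>k = a \<or> k = b\<close> by (auto simp: closed_segment_eq_real_ivl)
    then show "closed_segment k t \<subseteq> {..kmin} \<or> closed_segment k t \<subseteq> {kmax..} \<or>
         (\<exists>a b. gap a b \<and> closed_segment k t \<subseteq> {a..b})"
      using \<open>gap a b\<close> by blast
  qed fact
  consider "kmax < t" | "t < kmin" | "kmin \<le> t" "t \<le> kmax" by linarith
  then show thesis
  proof cases
    case 1
    with kmin_kmax(2,4) assms(1) show ?thesis
      by (intro that[of kmax]) (force simp: closed_segment_eq_real_ivl open_segment_eq_real_ivl)+
  next
    case 2
    with kmin_kmax(1,3) assms(1) show ?thesis
      by (intro that[of kmin]) (force simp: closed_segment_eq_real_ivl open_segment_eq_real_ivl)+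
  next
    case 3
    note gap = gap_around[OF 3 assms(2)]
    show ?thesis
    proof (cases "c < t")
      case True
      then have "c \<le> left_pt t" using left_pt(3)[OF 3(1) assms(1)] by simp
      with gap True show ?thesis
        by (intro in_gap[of "left_pt t" "right_pt t" "left_pt t"]) (auto simp: closed_segment_eq_real_ivl)
    next
      case False
      then have "right_pt t \<le> c" using right_pt(3)[OF 3(2) assms(1)] by simp
      with gap False show ?thesis
        by (intro in_gap[of "left_pt t" "right_pt t" "right_pt t"]) (auto simp: closed_segment_eq_real_ivl)
    qed
  qed
qed

lemma has_real_derivative_glue:
  assumes compatible: "glue_compatible val ray piece"
    and ray: "\<And>c s. (ray c has_real_derivative ray' c s) (at s)"
    and piece: "\<And>a b s. gap a b \<Longrightarrow> a < s \<Longrightarrow> s < b \<Longrightarrow> (piece a b has_real_derivative piece' a b s) (at s)"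
    and piece_cont: "\<And>a b. gap a b \<Longrightarrow> continuous_on {a..b} (piece a b)"
    and deriv_cont: "\<And>c. c \<in> K \<Longrightarrow> isCont (glue val' ray' piece') c"
    and jet: "\<And>c \<epsilon>. c \<in> K \<Longrightarrow> \<epsilon> > 0 \<Longrightarrow>
      \<exists>\<delta>>0. \<forall>a\<in>K. \<bar>a - c\<bar> < \<delta> \<longrightarrow> \<bar>val a - val c - val' c * (a - c)\<bar> \<le> \<epsilon> * \<bar>a - c\<bar>"
  shows "(glue val ray piece has_real_derivative glue val' ray' piece' t) (at t)"
proof (cases "t \<in> K")
  case False
  then show ?thesis by (rule has_real_derivative_glue_off_K[OF _ ray piece])
next
  case True
  show ?thesis
  proof (rule has_real_derivative_at_set_point[OF deriv_cont[OF True]])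
    fix \<epsilon> :: real assume "\<epsilon> > 0"
    then show "\<exists>\<delta>>0. \<forall>a\<in>K. \<bar>a - t\<bar> < \<delta> \<longrightarrow> \<bar>glue val ray piece a - glue val ray piece t
        - glue val' ray' piece' t * (a - t)\<bar> \<le> \<epsilon> * \<bar>a - t\<bar>"
      using jet[OF True] True by (simp add: glue_on_K)
  next
    fix s assume "s \<notin> K"
    then obtain k where k: "k \<in> K" "k \<in> closed_segment t s" "open_segment k s \<inter> K = {}"
      and within: "closed_segment k s \<subseteq> {..kmin} \<or> closed_segment k s \<subseteq> {kmax..} \<or>
         (\<exists>a b. gap a b \<and> closed_segment k s \<subseteq> {a..b})"
      using segment_to_K[OF True] by blast
    have ray_cont: "continuous_on S (ray c)" for S c
      using ray by (meson DERIV_isCont continuous_at_imp_continuous_on)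
    have "continuous_on (closed_segment k s) (glue val ray piece)"
      using within
    proof (elim disjE exE conjE)
      assume "closed_segment k s \<subseteq> {..kmin}"
      with glue_on_closed_piece(1)[OF compatible] show ?thesis
        by (intro continuous_on_eq[OF ray_cont]) auto
    next
      assume "closed_segment k s \<subseteq> {kmax..}"
      with glue_on_closed_piece(2)[OF compatible] show ?thesis
        by (intro continuous_on_eq[OF ray_cont]) auto
    next
      fix a b assume "gap a b" "closed_segment k s \<subseteq> {a..b}"
      with glue_on_closed_piece(3)[OF compatible] show ?thesis
        by (intro continuous_on_eq[OF continuous_on_subset[OF piece_cont]]) auto
    qed
    moreover have "(glue val ray piece has_real_derivative glue val' ray' piece' x) (at x)"
      if "x \<in> open_segment k s" for x
      using that k(3) by (intro has_real_derivative_glue_off_K ray piece) auto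
    ultimately show "\<exists>k\<in>K \<inter> closed_segment t s. continuous_on (closed_segment k s) (glue val ray piece) \<and>
        (\<forall>x\<in>open_segment k s. (glue val ray piece has_real_derivative glue val' ray' piece' x) (at x))"
      using k by blast
  qed
qed

definition chord_x :: "real \<Rightarrow> real \<Rightarrow> real" where "chord_x a b = (f b - f a) / (b - a)"
definition chord_y :: "real \<Rightarrow> real \<Rightarrow> real" where "chord_y a b = (g b - g a) / (b - a)"

definition area_target :: "real \<Rightarrow> real \<Rightarrow> real" where
  "area_target a b = (h b - h a + 2 * (f a * g b - g a * f b)) / (b - a)^2"

definition correction_bound :: "real \<Rightarrow> real \<Rightarrow> real" where
  "correction_bound a b = sqrt (315 * \<bar>area_target a b -
     profile_area (chord_x a b) (u a) (u b) 0 (chord_y a b) (v a) (v b) 0\<bar>)"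

definition correction :: "real \<Rightarrow> real \<Rightarrow> real \<times> real" where
  "correction a b = (SOME c.
     profile_area (chord_x a b) (u a) (u b) (fst c) (chord_y a b) (v a) (v b) (snd c) = area_target a b \<and>
     \<bar>fst c\<bar> \<le> correction_bound a b \<and> \<bar>snd c\<bar> \<le> correction_bound a b)"

lemma correction:
  "profile_area (chord_x a b) (u a) (u b) (fst (correction a b)) (chord_y a b) (v a) (v b)
     (snd (correction a b)) = area_target a b"
  "\<bar>fst (correction a b)\<bar> \<le> correction_bound a b" "\<bar>snd (correction a b)\<bar> \<le> correction_bound a b"
proof -
  obtain c1 c2 where "profile_area (chord_x a b) (u a) (u b) c1 (chord_y a b) (v a) (v b) c2 = area_target a b"
    "\<bar>c1\<bar> \<le> correction_bound a b" "\<bar>c2\<bar> \<le> correction_bound a b"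
    unfolding correction_bound_def by (rule exists_area_correction)
  then have "\<exists>c. profile_area (chord_x a b) (u a) (u b) (fst c) (chord_y a b) (v a) (v b) (snd c) =
      area_target a b \<and> \<bar>fst c\<bar> \<le> correction_bound a b \<and> \<bar>snd c\<bar> \<le> correction_bound a b"
    by (intro exI[of _ "(c1, c2)"]) simp
  from someI_ex[OF this] show
    "profile_area (chord_x a b) (u a) (u b) (fst (correction a b)) (chord_y a b) (v a) (v b)
       (snd (correction a b)) = area_target a b"
    "\<bar>fst (correction a b)\<bar> \<le> correction_bound a b" "\<bar>snd (correction a b)\<bar> \<le> correction_bound a b"
    unfolding correction_def by blast+
qed

definition px :: "real \<Rightarrow> real \<Rightarrow> real \<Rightarrow> real" where
  "px a b = profile_x (chord_x a b) (u a) (u b) (fst (correction a b))"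
definition px' :: "real \<Rightarrow> real \<Rightarrow> real \<Rightarrow> real" where
  "px' a b = profile_x_deriv (chord_x a b) (u a) (u b) (fst (correction a b))"
definition py :: "real \<Rightarrow> real \<Rightarrow> real \<Rightarrow> real" where
  "py a b = profile_y (chord_y a b) (v a) (v b) (snd (correction a b))"
definition py' :: "real \<Rightarrow> real \<Rightarrow> real \<Rightarrow> real" where
  "py' a b = profile_y_deriv (chord_y a b) (v a) (v b) (snd (correction a b))"
definition pz :: "real \<Rightarrow> real \<Rightarrow> real \<Rightarrow> real" where
  "pz a b s = 2 * integral {0..s} (\<lambda>\<sigma>. px' a b \<sigma> * py a b \<sigma> - px a b \<sigma> * py' a b \<sigma>)"

definition piece_F :: "real \<Rightarrow> real \<Rightarrow> real \<Rightarrow> real" where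
  "piece_F a b t = f a + (b - a) * px a b ((t - a) / (b - a))"
definition piece_dF :: "real \<Rightarrow> real \<Rightarrow> real \<Rightarrow> real" where
  "piece_dF a b t = px' a b ((t - a) / (b - a))"
definition piece_G :: "real \<Rightarrow> real \<Rightarrow> real \<Rightarrow> real" where
  "piece_G a b t = g a + (b - a) * py a b ((t - a) / (b - a))"
definition piece_dG :: "real \<Rightarrow> real \<Rightarrow> real \<Rightarrow> real" where
  "piece_dG a b t = py' a b ((t - a) / (b - a))"
definition piece_E :: "real \<Rightarrow> real \<Rightarrow> real \<Rightarrow> real" where
  "piece_E a b t = h a + 2 * g a * (piece_F a b t - f a) - 2 * f a * (piece_G a b t - g a)
     + (b - a)^2 * pz a b ((t - a) / (b - a))"

lemma piece_endpoints:
  assumes "a < b"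
  shows "piece_F a b a = f a" "piece_F a b b = f b" "piece_dF a b a = u a" "piece_dF a b b = u b"
    "piece_G a b a = g a" "piece_G a b b = g b" "piece_dG a b a = v a" "piece_dG a b b = v b"
    "piece_E a b a = h a" "piece_E a b b = h b"
proof -
  have s: "(a - a) / (b - a) = 0" "(b - a) / (b - a) = 1" using assms by simp_all
  show F: "piece_F a b a = f a" "piece_F a b b = f b" "piece_dF a b a = u a" "piece_dF a b b = u b"
    "piece_G a b a = g a" "piece_G a b b = g b" "piece_dG a b a = v a" "piece_dG a b b = v b"
    using assms unfolding piece_F_def piece_dF_def piece_G_def piece_dG_def px_def px'_def py_def py'_def s
    by (simp_all add: profile_endpoints chord_x_def chord_y_def)
  have "pz a b 1 = area_target a b"
    using correction(1)[of a b]
    by (simp add: pz_def profile_area_def lift_density_def[abs_def] px_def px'_def py_def py'_def)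
  moreover have "(b - a)^2 * area_target a b = h b - h a + 2 * (f a * g b - g a * f b)"
    using assms by (simp add: area_target_def)
  ultimately show "piece_E a b a = h a" "piece_E a b b = h b"
    unfolding piece_E_def F s by (simp_all add: pz_def algebra_simps)
qed

lemma has_real_derivative_piece_FG:
  assumes "a < b"
  shows "(piece_F a b has_real_derivative piece_dF a b t) (at t)"
    and "(piece_G a b has_real_derivative piece_dG a b t) (at t)"
  unfolding piece_F_def[abs_def] piece_dF_def piece_G_def[abs_def] piece_dG_def px_def px'_def
    py_def py'_def
  using assms
  by (auto intro!: derivative_eq_intros has_real_derivative_profile[THEN DERIV_chain2])

lemma isCont_piece_dFG:
  assumes "a < b"
  shows "isCont (piece_dF a b) t" "isCont (piece_dG a b) t"
proof -
  have "continuous_on UNIV (piece_dF a b)" "continuous_on UNIV (piece_dG a b)"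
    unfolding piece_dF_def[abs_def] piece_dG_def[abs_def] px'_def py'_def
    using assms by (auto intro!: continuous_on_compose2[OF continuous_on_profile(2)]
        continuous_on_compose2[OF continuous_on_profile(4)] continuous_intros)
  then show "isCont (piece_dF a b) t" "isCont (piece_dG a b) t"
    by (simp_all add: continuous_on_eq_continuous_at)
qed

lemma has_real_derivative_pz:
  assumes "s \<in> {0..1}"
  shows "(pz a b has_real_derivative 2 * (px' a b s * py a b s - px a b s * py' a b s)) (at s within {0..1})"
  unfolding pz_def[abs_def] px_def px'_def py_def py'_def
  by (intro DERIV_cmult integral_has_real_derivative continuous_intros assms)

lemma has_real_derivative_piece_E:
  assumes "a < t" "t < b"
  shows "(piece_E a b has_real_derivative
      2 * (piece_dF a b t * piece_G a b t - piece_F a b t * piece_dG a b t)) (at t)"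
proof -
  have "a < b" using assms by simp
  define s where "s = (t - a) / (b - a)"
  have "s \<in> {0<..<1}" using assms by (simp add: s_def field_simps)
  then have "at s within {0..1} = at s" by (intro at_within_interior) auto
  then have pz: "(pz a b has_real_derivative 2 * (px' a b s * py a b s - px a b s * py' a b s)) (at s)"
    using has_real_derivative_pz[of s a b] \<open>s \<in> {0<..<1}\<close> by simp
  have "(piece_E a b has_real_derivative
      2 * g a * piece_dF a b t - 2 * f a * piece_dG a b t
        + (b - a)^2 * (2 * (px' a b s * py a b s - px a b s * py' a b s) * (1 / (b - a)))) (at t)"
  proof -
    have "((\<lambda>t. (t - a) / (b - a)) has_real_derivative 1 / (b - a)) (at t)"
      using DERIV_cdivide[OF DERIV_diff[OF DERIV_ident DERIV_const], where c="b - a"] by simp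
    from DERIV_chain2[OF pz[unfolded s_def] this]
    have "((\<lambda>t. pz a b ((t - a) / (b - a))) has_real_derivative
        2 * (px' a b s * py a b s - px a b s * py' a b s) * (1 / (b - a))) (at t)"
      by (simp add: s_def)
    from DERIV_add[OF DERIV_diff[OF
          DERIV_add[OF DERIV_const DERIV_cmult[OF DERIV_diff[OF has_real_derivative_piece_FG(1)[OF \<open>a < b\<close>] DERIV_const]]]
          DERIV_cmult[OF DERIV_diff[OF has_real_derivative_piece_FG(2)[OF \<open>a < b\<close>] DERIV_const]]]
        DERIV_cmult[OF this]]
    show ?thesis
      unfolding piece_E_def[abs_def] by (simp add: s_def)
  qed
  moreover have "2 * g a * piece_dF a b t - 2 * f a * piece_dG a b t
        + (b - a)^2 * (2 * (px' a b s * py a b s - px a b s * py' a b s) * (1 / (b - a)))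
      = 2 * (piece_dF a b t * piece_G a b t - piece_F a b t * piece_dG a b t)"
  proof -
    have "(b - a)^2 * (2 * (px' a b s * py a b s - px a b s * py' a b s) * (1 / (b - a))) =
        (b - a) * (2 * (px' a b s * py a b s - px a b s * py' a b s))"
      using assms by (simp add: power2_eq_square)
    then show ?thesis
      unfolding piece_F_def piece_G_def piece_dF_def piece_dG_def s_def[symmetric]
      by (simp add: algebra_simps)
  qed
  ultimately show ?thesis by simp
qed

lemma continuous_on_piece_E:
  assumes "a < b"
  shows "continuous_on {a..b} (piece_E a b)"
proof -
  have "continuous_on {0..1} (pz a b)"
    using has_real_derivative_pz by (meson DERIV_continuous continuous_on_eq_continuous_within)
  moreover have "continuous_on {a..b} (\<lambda>t. (t - a) / (b - a))"
    using assms by (intro continuous_intros) auto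
  moreover have "(\<lambda>t. (t - a) / (b - a)) ` {a..b} \<subseteq> {0..1}"
    using assms by (auto simp: field_simps)
  ultimately have "continuous_on {a..b} (\<lambda>t. pz a b ((t - a) / (b - a)))"
    by (rule continuous_on_compose2)
  moreover have "continuous_on {a..b} (piece_F a b)" "continuous_on {a..b} (piece_G a b)"
    using has_real_derivative_piece_FG[OF assms]
    by (meson DERIV_isCont continuous_at_imp_continuous_on)+
  ultimately show ?thesis
    unfolding piece_E_def[abs_def] by (intro continuous_intros)
qed

definition ray_F :: "real \<Rightarrow> real \<Rightarrow> real" where "ray_F c t = f c + u c * (t - c)"
definition ray_G :: "real \<Rightarrow> real \<Rightarrow> real" where "ray_G c t = g c + v c * (t - c)"
definition ray_E :: "real \<Rightarrow> real \<Rightarrow> real" where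
  "ray_E c t = h c + 2 * g c * (ray_F c t - f c) - 2 * f c * (ray_G c t - g c)"

lemma has_real_derivative_ray:
  "(ray_F c has_real_derivative u c) (at t)" "(ray_G c has_real_derivative v c) (at t)"
  "(ray_E c has_real_derivative 2 * (u c * ray_G c t - ray_F c t * v c)) (at t)"
proof -
  show F: "(ray_F c has_real_derivative u c) (at t)" and G: "(ray_G c has_real_derivative v c) (at t)"
    unfolding ray_F_def[abs_def] ray_G_def[abs_def]
    using DERIV_add[OF DERIV_const DERIV_cmult[OF DERIV_diff[OF DERIV_ident DERIV_const]]] by simp_all
  have "(ray_E c has_real_derivative 0 + 2 * g c * (u c - 0) - 2 * f c * (v c - 0)) (at t)"
    unfolding ray_E_def[abs_def]
    by (intro DERIV_diff DERIV_add DERIV_cmult DERIV_const F G)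
  moreover have "2 * g c * u c - 2 * f c * v c = 2 * (u c * ray_G c t - ray_F c t * v c)"
    by (simp add: ray_F_def ray_G_def algebra_simps)
  ultimately show "(ray_E c has_real_derivative 2 * (u c * ray_G c t - ray_F c t * v c)) (at t)"
    by simp
qed

definition ext_F :: "real \<Rightarrow> real" where "ext_F = glue f ray_F piece_F"
definition ext_dF :: "real \<Rightarrow> real" where "ext_dF = glue u (\<lambda>c t. u c) piece_dF"
definition ext_G :: "real \<Rightarrow> real" where "ext_G = glue g ray_G piece_G"
definition ext_dG :: "real \<Rightarrow> real" where "ext_dG = glue v (\<lambda>c t. v c) piece_dG"
definition ext_E :: "real \<Rightarrow> real" where "ext_E = glue h ray_E piece_E"
definition ext_dE :: "real \<Rightarrow> real" where
  "ext_dE = glue (\<lambda>t. 2 * (u t * g t - f t * v t)) (\<lambda>c t. 2 * (u c * ray_G c t - ray_F c t * v c))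
     (\<lambda>a b t. 2 * (piece_dF a b t * piece_G a b t - piece_F a b t * piece_dG a b t))"

lemma ext_dE_eq: "ext_dE t = 2 * (ext_dF t * ext_G t - ext_F t * ext_dG t)"
  by (simp add: ext_dE_def ext_dF_def ext_G_def ext_F_def ext_dG_def glue_def)

lemma glue_compatible_ext:
  "glue_compatible f ray_F piece_F" "glue_compatible u (\<lambda>c t. u c) piece_dF"
  "glue_compatible g ray_G piece_G" "glue_compatible v (\<lambda>c t. v c) piece_dG"
  "glue_compatible h ray_E piece_E"
  by (auto simp: glue_compatible_def gap_def piece_endpoints ray_F_def ray_G_def ray_E_def)

lemma slopes_near:
  assumes "c \<in> K" "\<epsilon> > 0"
  obtains \<delta> where "\<delta> > 0"
    and "\<And>a. a \<in> K \<Longrightarrow> \<bar>a - c\<bar> < \<delta> \<Longrightarrow> \<bar>u a - u c\<bar> \<le> \<epsilon> \<and> \<bar>v a - v c\<bar> \<le> \<epsilon>"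
    and "\<And>a b t. gap a b \<Longrightarrow> \<bar>a - c\<bar> < \<delta> \<Longrightarrow> \<bar>b - c\<bar> < \<delta> \<Longrightarrow> t \<in> {a..b} \<Longrightarrow>
      \<bar>piece_dF a b t - u c\<bar> \<le> \<epsilon> \<and> \<bar>piece_dG a b t - v c\<bar> \<le> \<epsilon>"
proof -
  obtain \<eta>0 where "\<eta>0 > 0" and \<eta>0: "\<And>X1 u1 v1 X2 u2 v2 Z.
      \<bar>X1 - u c\<bar> \<le> \<eta>0 \<Longrightarrow> \<bar>u1 - u c\<bar> \<le> \<eta>0 \<Longrightarrow> \<bar>v1 - u c\<bar> \<le> \<eta>0 \<Longrightarrow>
      \<bar>X2 - v c\<bar> \<le> \<eta>0 \<Longrightarrow> \<bar>u2 - v c\<bar> \<le> \<eta>0 \<Longrightarrow> \<bar>v2 - v c\<bar> \<le> \<eta>0 \<Longrightarrow> \<bar>Z\<bar> \<le> \<eta>0 \<Longrightarrow>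
      sqrt (315 * \<bar>Z - profile_area X1 u1 v1 0 X2 u2 v2 0\<bar>) \<le> \<epsilon> / 6"
    using small_area_correction[of "\<epsilon> / 6" "u c" "v c"] \<open>\<epsilon> > 0\<close> by auto
  define \<eta> where "\<eta> = min \<eta>0 (\<epsilon> / 18)"
  have "\<eta> > 0" "\<eta> \<le> \<eta>0" "\<eta> \<le> \<epsilon> / 18"
    using \<open>\<eta>0 > 0\<close> \<open>\<epsilon> > 0\<close> by (auto simp: \<eta>_def)
  then obtain \<delta> where "\<delta> > 0" and \<delta>: "\<And>a b. a \<in> K \<Longrightarrow> b \<in> K \<Longrightarrow> \<bar>b - a\<bar> < \<delta> \<Longrightarrow>
      \<bar>f b - f a - u a * (b - a)\<bar> \<le> \<eta> / 3 * \<bar>b - a\<bar> \<and> \<bar>g b - g a - v a * (b - a)\<bar> \<le> \<eta> / 3 * \<bar>b - a\<bar> \<and>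
      \<bar>h b - h a + 2 * (f a * g b - g a * f b)\<bar> \<le> \<eta> / 3 * (b - a)^2 \<and>
      \<bar>u a - u b\<bar> \<le> 2 * (\<eta> / 3) \<and> \<bar>v a - v b\<bar> \<le> 2 * (\<eta> / 3)"
    using whitney_horizontal_velocity_close[OF whitney, of "\<eta> / 3"] by auto
  have near_c: "\<bar>u a - u c\<bar> \<le> \<eta> \<and> \<bar>v a - v c\<bar> \<le> \<eta>" if "a \<in> K" "\<bar>a - c\<bar> < \<delta>" for a
    using \<delta>[OF \<open>c \<in> K\<close> that(1)] that(2) \<open>\<eta> > 0\<close> by (simp add: abs_minus_commute)
  show ?thesis
  proof (rule that[of "\<delta> / 2"])
    show "\<delta> / 2 > 0" using \<open>\<delta> > 0\<close> by simp
    fix a assume "a \<in> K" "\<bar>a - c\<bar> < \<delta> / 2"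
    then show "\<bar>u a - u c\<bar> \<le> \<epsilon> \<and> \<bar>v a - v c\<bar> \<le> \<epsilon>"
      using near_c[of a] \<open>\<delta> > 0\<close> \<open>\<eta> \<le> \<epsilon> / 18\<close> \<open>\<epsilon> > 0\<close> by auto
  next
    fix a b t assume "gap a b" "\<bar>a - c\<bar> < \<delta> / 2" "\<bar>b - c\<bar> < \<delta> / 2" "t \<in> {a..b}"
    then have "a \<in> K" "b \<in> K" "a < b" by (auto simp: gap_def)
    have ab: "\<bar>b - a\<bar> < \<delta>" using \<open>\<bar>a - c\<bar> < \<delta> / 2\<close> \<open>\<bar>b - c\<bar> < \<delta> / 2\<close> by arith
    have s: "(t - a) / (b - a) \<in> {0..1}" using \<open>t \<in> {a..b}\<close> \<open>a < b\<close> by (simp add: field_simps)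
    note est = \<delta>[OF \<open>a \<in> K\<close> \<open>b \<in> K\<close> ab]
    have "chord_x a b - u a = (f b - f a - u a * (b - a)) / (b - a)"
      "chord_y a b - v a = (g b - g a - v a * (b - a)) / (b - a)"
      using \<open>a < b\<close> by (simp_all add: chord_x_def chord_y_def field_simps)
    then have "\<bar>chord_x a b - u a\<bar> \<le> \<eta> / 3" "\<bar>chord_y a b - v a\<bar> \<le> \<eta> / 3" "\<bar>area_target a b\<bar> \<le> \<eta> / 3"
      using est \<open>a < b\<close> by (simp_all add: area_target_def abs_div pos_divide_le_eq)
    moreover have "\<bar>u a - u c\<bar> \<le> 2 * (\<eta> / 3)" "\<bar>v a - v c\<bar> \<le> 2 * (\<eta> / 3)"
      "\<bar>u b - u c\<bar> \<le> \<eta>" "\<bar>v b - v c\<bar> \<le> \<eta>"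
      using \<delta>[OF \<open>c \<in> K\<close> \<open>a \<in> K\<close>] near_c[OF \<open>b \<in> K\<close>] \<open>\<bar>a - c\<bar> < \<delta> / 2\<close> \<open>\<bar>b - c\<bar> < \<delta> / 2\<close>
        \<open>\<delta> > 0\<close> by (auto simp: abs_minus_commute)
    ultimately have data: "\<bar>chord_x a b - u c\<bar> \<le> \<eta>" "\<bar>u a - u c\<bar> \<le> \<eta>" "\<bar>u b - u c\<bar> \<le> \<eta>"
      "\<bar>chord_y a b - v c\<bar> \<le> \<eta>" "\<bar>v a - v c\<bar> \<le> \<eta>" "\<bar>v b - v c\<bar> \<le> \<eta>" "\<bar>area_target a b\<bar> \<le> \<eta>"
      by linarith+
    then have "correction_bound a b \<le> \<epsilon> / 6"
      unfolding correction_bound_def using \<open>\<eta> \<le> \<eta>0\<close> by (intro \<eta>0) auto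
    then have "\<bar>fst (correction a b)\<bar> \<le> \<epsilon> / 6" "\<bar>snd (correction a b)\<bar> \<le> \<epsilon> / 6"
      using correction(2,3)[of a b] by linarith+
    moreover have "\<bar>piece_dF a b t - u c\<bar> \<le>
        3 * (\<bar>chord_x a b - u c\<bar> + \<bar>u a - u c\<bar> + \<bar>u b - u c\<bar> + \<bar>fst (correction a b)\<bar>)"
      "\<bar>piece_dG a b t - v c\<bar> \<le>
        3 * (\<bar>chord_y a b - v c\<bar> + \<bar>v a - v c\<bar> + \<bar>v b - v c\<bar> + \<bar>snd (correction a b)\<bar>)"
      unfolding piece_dF_def piece_dG_def px'_def py'_def by (intro abs_profile_deriv_minus_le s)+
    ultimately have "\<bar>piece_dF a b t - u c\<bar> \<le> \<epsilon>" "\<bar>piece_dG a b t - v c\<bar> \<le> \<epsilon>"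
      using data \<open>\<eta> \<le> \<epsilon> / 18\<close> unfolding distrib_left by linarith+
    then show "\<bar>piece_dF a b t - u c\<bar> \<le> \<epsilon> \<and> \<bar>piece_dG a b t - v c\<bar> \<le> \<epsilon>" ..
  qed
qed

lemma gap_or_accumulates_right:
  assumes "c \<in> K" "c < kmax"
  shows "(\<exists>b. gap c b) \<or> (\<forall>\<delta>>0. \<exists>k\<in>K. c < k \<and> k < c + \<delta>)"
proof (rule disjCI)
  assume "\<not> (\<forall>\<delta>>0. \<exists>k\<in>K. c < k \<and> k < c + \<delta>)"
  then obtain \<delta> where "\<delta> > 0" and "\<forall>k\<in>K. k \<le> c \<or> c + \<delta> \<le> k"
    by (auto simp: not_less)
  then have isolated: "\<And>k. k \<in> K \<Longrightarrow> c < k \<Longrightarrow> c + \<delta> \<le> k" by force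
  define m where "m = min \<delta> (kmax - c)"
  define t where "t = c + m / 2"
  have "0 < m" "m \<le> \<delta>" "m \<le> kmax - c"
    using \<open>\<delta> > 0\<close> assms(2) by (auto simp: m_def)
  then have t: "c < t" "t < c + \<delta>" "t < kmax" using t_def by linarith+
  then have "t \<notin> K" "kmin \<le> t" using isolated kmin_kmax(3)[OF assms(1)] by force+
  note gap = gap_around[OF \<open>kmin \<le> t\<close> less_imp_le[OF \<open>t < kmax\<close>] \<open>t \<notin> K\<close>]
  have "c \<le> left_pt t" using left_pt(3)[OF \<open>kmin \<le> t\<close> assms(1)] t by simp
  moreover have "\<not> c < left_pt t"
    using isolated[OF left_pt(1)[OF \<open>kmin \<le> t\<close>]] gap(2) t by auto
  ultimately show "\<exists>b. gap c b" using gap(1) by (intro exI[of _ "right_pt t"]) simp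
qed

lemma gap_or_accumulates_left:
  assumes "c \<in> K" "kmin < c"
  shows "(\<exists>a. gap a c) \<or> (\<forall>\<delta>>0. \<exists>k\<in>K. c - \<delta> < k \<and> k < c)"
proof (rule disjCI)
  assume "\<not> (\<forall>\<delta>>0. \<exists>k\<in>K. c - \<delta> < k \<and> k < c)"
  then obtain \<delta> where "\<delta> > 0" and "\<forall>k\<in>K. k \<le> c - \<delta> \<or> c \<le> k"
    by (auto simp: not_less)
  then have isolated: "\<And>k. k \<in> K \<Longrightarrow> k < c \<Longrightarrow> k \<le> c - \<delta>" by force
  define m where "m = min \<delta> (c - kmin)"
  define t where "t = c - m / 2"
  have "0 < m" "m \<le> \<delta>" "m \<le> c - kmin"
    using \<open>\<delta> > 0\<close> assms(2) by (auto simp: m_def)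
  then have t: "t < c" "c - \<delta> < t" "kmin < t" using t_def by linarith+
  then have "t \<notin> K" "t \<le> kmax" using isolated kmin_kmax(4)[OF assms(1)] by force+
  note gap = gap_around[OF less_imp_le[OF \<open>kmin < t\<close>] \<open>t \<le> kmax\<close> \<open>t \<notin> K\<close>]
  have "right_pt t \<le> c" using right_pt(3)[OF \<open>t \<le> kmax\<close> assms(1)] t by simp
  moreover have "\<not> right_pt t < c"
    using isolated[OF right_pt(1)[OF \<open>t \<le> kmax\<close>]] gap(3) t by auto
  ultimately show "\<exists>a. gap a c" using gap(1) by (intro exI[of _ "left_pt t"]) simp
qed

lemma piece_slopes_near_ends:
  assumes "gap a b" "\<epsilon> > 0"
  obtains d where "d > 0"
    and "\<And>t. \<bar>t - a\<bar> < d \<Longrightarrow> \<bar>piece_dF a b t - u a\<bar> < \<epsilon> \<and> \<bar>piece_dG a b t - v a\<bar> < \<epsilon>"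
    and "\<And>t. \<bar>t - b\<bar> < d \<Longrightarrow> \<bar>piece_dF a b t - u b\<bar> < \<epsilon> \<and> \<bar>piece_dG a b t - v b\<bar> < \<epsilon>"
proof -
  have "a < b" using assms(1) by (simp add: gap_def)
  have near: "\<exists>d>0. \<forall>t. \<bar>t - c\<bar> < d \<longrightarrow>
      \<bar>piece_dF a b t - piece_dF a b c\<bar> < \<epsilon> \<and> \<bar>piece_dG a b t - piece_dG a b c\<bar> < \<epsilon>" for c
  proof -
    from isCont_piece_dFG(1)[OF \<open>a < b\<close>, of c] \<open>\<epsilon> > 0\<close> obtain d1 where "d1 > 0"
      and d1: "\<forall>t. \<bar>t - c\<bar> < d1 \<longrightarrow> \<bar>piece_dF a b t - piece_dF a b c\<bar> < \<epsilon>"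
      unfolding continuous_at_eps_delta dist_real_def by blast
    from isCont_piece_dFG(2)[OF \<open>a < b\<close>, of c] \<open>\<epsilon> > 0\<close> obtain d2 where "d2 > 0"
      and d2: "\<forall>t. \<bar>t - c\<bar> < d2 \<longrightarrow> \<bar>piece_dG a b t - piece_dG a b c\<bar> < \<epsilon>"
      unfolding continuous_at_eps_delta dist_real_def by blast
    from d1 d2 \<open>d1 > 0\<close> \<open>d2 > 0\<close> show ?thesis by (intro exI[of _ "min d1 d2"]) auto
  qed
  obtain da where "da > 0"
    and "\<forall>t. \<bar>t - a\<bar> < da \<longrightarrow> \<bar>piece_dF a b t - u a\<bar> < \<epsilon> \<and> \<bar>piece_dG a b t - v a\<bar> < \<epsilon>"
    using near[of a] piece_endpoints[OF \<open>a < b\<close>] by auto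
  moreover obtain db where "db > 0"
    and "\<forall>t. \<bar>t - b\<bar> < db \<longrightarrow> \<bar>piece_dF a b t - u b\<bar> < \<epsilon> \<and> \<bar>piece_dG a b t - v b\<bar> < \<epsilon>"
    using near[of b] piece_endpoints[OF \<open>a < b\<close>] by auto
  ultimately show ?thesis by (intro that[of "min da db"]) auto
qed

lemma slopes_between_near_points:
  assumes "c \<in> K" "\<epsilon> > 0"
  obtains \<delta> where "\<delta> > 0" and "\<And>k t. k \<in> K \<Longrightarrow> \<bar>k - c\<bar> < \<delta> \<Longrightarrow> t \<in> closed_segment c k \<Longrightarrow>
    \<bar>ext_dF t - u c\<bar> \<le> \<epsilon> \<and> \<bar>ext_dG t - v c\<bar> \<le> \<epsilon>"
proof -
  obtain \<delta> where "\<delta> > 0"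
    and on_K: "\<And>a. a \<in> K \<Longrightarrow> \<bar>a - c\<bar> < \<delta> \<Longrightarrow> \<bar>u a - u c\<bar> \<le> \<epsilon> \<and> \<bar>v a - v c\<bar> \<le> \<epsilon>"
    and on_gaps: "\<And>a b t. gap a b \<Longrightarrow> \<bar>a - c\<bar> < \<delta> \<Longrightarrow> \<bar>b - c\<bar> < \<delta> \<Longrightarrow> t \<in> {a..b} \<Longrightarrow>
      \<bar>piece_dF a b t - u c\<bar> \<le> \<epsilon> \<and> \<bar>piece_dG a b t - v c\<bar> \<le> \<epsilon>"
    using slopes_near[OF assms] by blast
  have "\<bar>ext_dF t - u c\<bar> \<le> \<epsilon> \<and> \<bar>ext_dG t - v c\<bar> \<le> \<epsilon>"
    if k: "k \<in> K" "\<bar>k - c\<bar> < \<delta>" and t: "t \<in> closed_segment c k" for k t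
  proof (cases "t \<in> K")
    case True
    have "\<bar>t - c\<bar> < \<delta>" using t k(2) by (auto simp: closed_segment_eq_real_ivl split: if_splits)
    then show ?thesis using on_K[OF True] True by (simp add: ext_dF_def ext_dG_def glue_on_K)
  next
    case False
    have in_hull: "min c k \<le> t" "t \<le> max c k"
      using t by (auto simp: closed_segment_eq_real_ivl split: if_splits)
    moreover have "min c k \<in> K" "max c k \<in> K" using \<open>c \<in> K\<close> k(1) by (simp_all add: min_def max_def)
    ultimately have "kmin \<le> t" "t \<le> kmax" using kmin_kmax(3,4) by force+
    note gap = gap_around[OF this False]
    have "min c k \<le> left_pt t" "right_pt t \<le> max c k"
      using left_pt(3)[OF \<open>kmin \<le> t\<close> \<open>min c k \<in> K\<close>] right_pt(3)[OF \<open>t \<le> kmax\<close> \<open>max c k \<in> K\<close>]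
        in_hull by auto
    then have "\<bar>left_pt t - c\<bar> < \<delta>" "\<bar>right_pt t - c\<bar> < \<delta>"
      using gap(2,3) in_hull k(2) by (auto simp: min_def max_def split: if_splits)
    then show ?thesis
      using on_gaps[OF gap(1), of t] gap(2,3) glue_in_gap[OF gap(1) gap(2,3)]
      by (simp add: ext_dF_def ext_dG_def)
  qed
  with \<open>\<delta> > 0\<close> show ?thesis using that by blast
qed

lemma slopes_right:
  assumes "c \<in> K" "\<epsilon> > 0"
  shows "\<exists>\<delta>>0. \<forall>t. c < t \<and> t < c + \<delta> \<longrightarrow> \<bar>ext_dF t - u c\<bar> \<le> \<epsilon> \<and> \<bar>ext_dG t - v c\<bar> \<le> \<epsilon>"
proof -
  consider "c = kmax" | b where "gap c b" | "\<forall>\<delta>>0. \<exists>k\<in>K. c < k \<and> k < c + \<delta>"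
    using gap_or_accumulates_right[OF assms(1)] kmin_kmax(4)[OF assms(1)] by force
  then show ?thesis
  proof cases
    case 1
    then show ?thesis
      using assms(2) by (intro exI[of _ 1]) (simp add: ext_dF_def ext_dG_def glue_above)
  next
    case (2 b)
    then have "c < b" by (simp add: gap_def)
    obtain d where "d > 0"
      and d: "\<And>t. \<bar>t - c\<bar> < d \<Longrightarrow> \<bar>piece_dF c b t - u c\<bar> < \<epsilon> \<and> \<bar>piece_dG c b t - v c\<bar> < \<epsilon>"
      using piece_slopes_near_ends[OF 2 assms(2)] by metis
    have "\<bar>ext_dF t - u c\<bar> \<le> \<epsilon> \<and> \<bar>ext_dG t - v c\<bar> \<le> \<epsilon>" if "c < t" "t < c + min d (b - c)" for t
    proof -
      have "\<bar>t - c\<bar> < d" "t < b" using that by auto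
      then show ?thesis
        using d[of t] glue_in_gap[OF 2 \<open>c < t\<close>] by (simp add: ext_dF_def ext_dG_def)
    qed
    then show ?thesis using \<open>d > 0\<close> \<open>c < b\<close> by (intro exI[of _ "min d (b - c)"]) auto
  next
    case 3
    obtain \<delta> where "\<delta> > 0" and \<delta>: "\<And>k t. k \<in> K \<Longrightarrow> \<bar>k - c\<bar> < \<delta> \<Longrightarrow> t \<in> closed_segment c k \<Longrightarrow>
        \<bar>ext_dF t - u c\<bar> \<le> \<epsilon> \<and> \<bar>ext_dG t - v c\<bar> \<le> \<epsilon>"
      using slopes_between_near_points[OF assms] by blast
    with 3 obtain k where "k \<in> K" "c < k" "k < c + \<delta>" by blast
    then show ?thesis
      using \<delta>[of k] by (intro exI[of _ "k - c"]) (auto simp: closed_segment_eq_real_ivl)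
  qed
qed

lemma slopes_left:
  assumes "c \<in> K" "\<epsilon> > 0"
  shows "\<exists>\<delta>>0. \<forall>t. c - \<delta> < t \<and> t < c \<longrightarrow> \<bar>ext_dF t - u c\<bar> \<le> \<epsilon> \<and> \<bar>ext_dG t - v c\<bar> \<le> \<epsilon>"
proof -
  consider "c = kmin" | a where "gap a c" | "\<forall>\<delta>>0. \<exists>k\<in>K. c - \<delta> < k \<and> k < c"
    using gap_or_accumulates_left[OF assms(1)] kmin_kmax(3)[OF assms(1)] by force
  then show ?thesis
  proof cases
    case 1
    then show ?thesis
      using assms(2) by (intro exI[of _ 1]) (simp add: ext_dF_def ext_dG_def glue_below)
  next
    case (2 a)
    then have "a < c" by (simp add: gap_def)
    obtain d where "d > 0"
      and d: "\<And>t. \<bar>t - c\<bar> < d \<Longrightarrow> \<bar>piece_dF a c t - u c\<bar> < \<epsilon> \<and> \<bar>piece_dG a c t - v c\<bar> < \<epsilon>"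
      using piece_slopes_near_ends[OF 2 assms(2)] by metis
    have "\<bar>ext_dF t - u c\<bar> \<le> \<epsilon> \<and> \<bar>ext_dG t - v c\<bar> \<le> \<epsilon>" if "c - min d (c - a) < t" "t < c" for t
    proof -
      have "\<bar>t - c\<bar> < d" "a < t" using that by auto
      then show ?thesis
        using d[of t] glue_in_gap[OF 2 \<open>a < t\<close> \<open>t < c\<close>] by (simp add: ext_dF_def ext_dG_def)
    qed
    then show ?thesis using \<open>d > 0\<close> \<open>a < c\<close> by (intro exI[of _ "min d (c - a)"]) auto
  next
    case 3
    obtain \<delta> where "\<delta> > 0" and \<delta>: "\<And>k t. k \<in> K \<Longrightarrow> \<bar>k - c\<bar> < \<delta> \<Longrightarrow> t \<in> closed_segment c k \<Longrightarrow>
        \<bar>ext_dF t - u c\<bar> \<le> \<epsilon> \<and> \<bar>ext_dG t - v c\<bar> \<le> \<epsilon>"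
      using slopes_between_near_points[OF assms] by blast
    with 3 obtain k where "k \<in> K" "c - \<delta> < k" "k < c" by blast
    then show ?thesis
      using \<delta>[of k] by (intro exI[of _ "c - k"]) (auto simp: closed_segment_eq_real_ivl)
  qed
qed

lemma isCont_ext_slopes: "isCont ext_dF t" "isCont ext_dG t"
proof -
  have "isCont ext_dF t \<and> isCont ext_dG t"
  proof (cases "t \<in> K")
    case False
    have "a < b" if "gap a b" for a b using that by (simp add: gap_def)
    with False show ?thesis
      unfolding ext_dF_def ext_dG_def
      by (auto intro!: isCont_glue_off_K isCont_piece_dFG)
  next
    case True
    have "\<exists>d>0. \<forall>s. \<bar>s - t\<bar> < d \<longrightarrow> \<bar>ext_dF s - u t\<bar> < e \<and> \<bar>ext_dG s - v t\<bar> < e" if "e > 0" for e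
    proof -
      obtain dR where "dR > 0"
        and dR: "\<And>s. t < s \<Longrightarrow> s < t + dR \<Longrightarrow> \<bar>ext_dF s - u t\<bar> \<le> e / 2 \<and> \<bar>ext_dG s - v t\<bar> \<le> e / 2"
        using slopes_right[OF True, of "e / 2"] \<open>e > 0\<close> by auto
      obtain dL where "dL > 0"
        and dL: "\<And>s. t - dL < s \<Longrightarrow> s < t \<Longrightarrow> \<bar>ext_dF s - u t\<bar> \<le> e / 2 \<and> \<bar>ext_dG s - v t\<bar> \<le> e / 2"
        using slopes_left[OF True, of "e / 2"] \<open>e > 0\<close> by auto
      have "\<bar>ext_dF s - u t\<bar> < e \<and> \<bar>ext_dG s - v t\<bar> < e" if "\<bar>s - t\<bar> < min dR dL" for s
      proof -
        consider "s = t" | "t < s" | "s < t" by linarith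
        then show ?thesis
          using dR[of s] dL[of s] that \<open>e > 0\<close> True
          by cases (auto simp: ext_dF_def ext_dG_def glue_on_K)
      qed
      then show ?thesis using \<open>dR > 0\<close> \<open>dL > 0\<close> by (intro exI[of _ "min dR dL"]) auto
    qed
    then show ?thesis
      using True unfolding continuous_at_eps_delta dist_real_def
      by (simp add: ext_dF_def ext_dG_def glue_on_K) meson
  qed
  then show "isCont ext_dF t" "isCont ext_dG t" by auto
qed

lemma ext_on_K: "t \<in> K \<Longrightarrow> ext_F t = f t \<and> ext_G t = g t \<and> ext_E t = h t"
  by (simp add: ext_F_def ext_G_def ext_E_def glue_on_K)

lemma has_real_derivative_ext:
  shows "(ext_F has_real_derivative ext_dF t) (at t)"
    and "(ext_G has_real_derivative ext_dG t) (at t)"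
    and "(ext_E has_real_derivative 2 * (ext_dF t * ext_G t - ext_F t * ext_dG t)) (at t)"
proof -
  have lt: "a < b" if "gap a b" for a b using that by (simp add: gap_def)
  have jet: "\<exists>\<delta>>0. \<forall>a\<in>K. \<bar>a - c\<bar> < \<delta> \<longrightarrow> \<bar>F a - F c - F' c * (a - c)\<bar> \<le> \<epsilon> * \<bar>a - c\<bar>"
    if "c \<in> K" "\<epsilon> > 0" and "F = f \<and> F' = u \<or> F = g \<and> F' = v" for c \<epsilon> F F'
  proof -
    obtain \<delta> where "\<delta> > 0" and \<delta>: "\<And>a b. a \<in> K \<Longrightarrow> b \<in> K \<Longrightarrow> \<bar>b - a\<bar> < \<delta> \<Longrightarrow>
        \<bar>f b - f a - u a * (b - a)\<bar> \<le> \<epsilon> * \<bar>b - a\<bar> \<and> \<bar>g b - g a - v a * (b - a)\<bar> \<le> \<epsilon> * \<bar>b - a\<bar> \<and>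
        \<bar>h b - h a + 2 * (f a * g b - g a * f b)\<bar> \<le> \<epsilon> * (b - a)^2"
      using whitney_horizontalD[OF whitney \<open>\<epsilon> > 0\<close>] by blast
    have "\<bar>F a - F c - F' c * (a - c)\<bar> \<le> \<epsilon> * \<bar>a - c\<bar>" if "a \<in> K" "\<bar>a - c\<bar> < \<delta>" for a
      using \<delta>[OF \<open>c \<in> K\<close> that] \<open>F = f \<and> F' = u \<or> F = g \<and> F' = v\<close> by auto
    with \<open>\<delta> > 0\<close> show ?thesis by blast
  qed
  have piece_cont: "continuous_on {a..b} (piece_F a b)" "continuous_on {a..b} (piece_G a b)"
    if "gap a b" for a b
    using has_real_derivative_piece_FG[OF lt[OF that]]
    by (meson DERIV_isCont continuous_at_imp_continuous_on)+
  show F: "(ext_F has_real_derivative ext_dF t) (at t)" for t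
    unfolding ext_F_def ext_dF_def
  proof (rule has_real_derivative_glue[OF glue_compatible_ext(1) has_real_derivative_ray(1)])
    show "(piece_F a b has_real_derivative piece_dF a b s) (at s)" if "gap a b" "a < s" "s < b" for a b s
      using has_real_derivative_piece_FG(1)[OF lt[OF that(1)]] .
    show "isCont (glue u (\<lambda>c t. u c) piece_dF) c" for c
      using isCont_ext_slopes(1) unfolding ext_dF_def .
  qed (simp_all add: piece_cont jet)
  show G: "(ext_G has_real_derivative ext_dG t) (at t)" for t
    unfolding ext_G_def ext_dG_def
  proof (rule has_real_derivative_glue[OF glue_compatible_ext(3) has_real_derivative_ray(2)])
    show "(piece_G a b has_real_derivative piece_dG a b s) (at s)" if "gap a b" "a < s" "s < b" for a b s
      using has_real_derivative_piece_FG(2)[OF lt[OF that(1)]] .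
    show "isCont (glue v (\<lambda>c t. v c) piece_dG) c" for c
      using isCont_ext_slopes(2) unfolding ext_dG_def .
  qed (simp_all add: piece_cont jet)
  have dE_cont: "isCont ext_dE c" for c
    unfolding ext_dE_eq[abs_def]
    by (intro continuous_intros isCont_ext_slopes DERIV_isCont[OF F] DERIV_isCont[OF G])
  have "(ext_E has_real_derivative ext_dE t) (at t)"
    unfolding ext_E_def ext_dE_def
  proof (rule has_real_derivative_glue[OF glue_compatible_ext(5) has_real_derivative_ray(3)])
    show "continuous_on {a..b} (piece_E a b)" if "gap a b" for a b
      using continuous_on_piece_E[OF lt[OF that]] .
    show "\<exists>\<delta>>0. \<forall>a\<in>K. \<bar>a - c\<bar> < \<delta> \<longrightarrow>
        \<bar>h a - h c - 2 * (u c * g c - f c * v c) * (a - c)\<bar> \<le> \<epsilon> * \<bar>a - c\<bar>"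
      if "c \<in> K" "\<epsilon> > 0" for c \<epsilon>
      by (rule whitney_horizontal_lift_estimate[OF whitney that])
  qed (use has_real_derivative_piece_E dE_cont in \<open>auto simp: ext_dE_def\<close>)
  then show "(ext_E has_real_derivative 2 * (ext_dF t * ext_G t - ext_F t * ext_dG t)) (at t)"
    by (simp add: ext_dE_eq)
qed

lemma ext_outside:
  shows "t \<le> kmin \<Longrightarrow> ext_F t = ray_F kmin t \<and> ext_G t = ray_G kmin t \<and> ext_dF t = u kmin \<and> ext_dG t = v kmin"
    and "kmax \<le> t \<Longrightarrow> ext_F t = ray_F kmax t \<and> ext_G t = ray_G kmax t \<and> ext_dF t = u kmax \<and> ext_dG t = v kmax"
  unfolding ext_F_def ext_G_def ext_dF_def ext_dG_def
  using glue_on_closed_piece(1,2)[OF glue_compatible_ext(1)] glue_on_closed_piece(1,2)[OF glue_compatible_ext(2)]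
    glue_on_closed_piece(1,2)[OF glue_compatible_ext(3)] glue_on_closed_piece(1,2)[OF glue_compatible_ext(4)]
  by simp_all

lemma C1_fun_ext: "C1_fun ext_F" "C1_fun ext_G" "C1_fun ext_E"
proof -
  have cont: "continuous_on UNIV ext_dF" "continuous_on UNIV ext_dG"
    using isCont_ext_slopes by (simp_all add: continuous_at_imp_continuous_on)
  have "bounded (range ext_dF)" "bounded (range ext_dG)"
    using ext_outside order_refl
    by (intro bounded_range_if_constant_outside[of _ kmin kmax] cont; simp)+
  then show "C1_fun ext_F" "C1_fun ext_G"
    unfolding C1_fun_def using has_real_derivative_ext(1,2) cont by blast+
  define dE where "dE t = 2 * (ext_dF t * ext_G t - ext_F t * ext_dG t)" for t
  have "continuous_on UNIV dE"
    unfolding dE_def[abs_def]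
    using cont has_real_derivative_ext(1,2)
    by (intro continuous_intros) (auto intro: DERIV_continuous_on has_field_derivative_at_within)
  moreover have "dE t = dE c" if "c = kmin \<and> t \<le> kmin \<or> c = kmax \<and> kmax \<le> t" for c t
  proof -
    have eqs: "ext_F t = f c + u c * (t - c)" "ext_G t = g c + v c * (t - c)" "ext_dF t = u c"
      "ext_dG t = v c" "ext_F c = f c" "ext_G c = g c" "ext_dF c = u c" "ext_dG c = v c"
      using that ext_outside by (auto simp: ray_F_def ray_G_def)
    show ?thesis unfolding dE_def eqs by (simp add: algebra_simps)
  qed
  ultimately have "bounded (range dE)"
    by (intro bounded_range_if_constant_outside[of _ kmin kmax]) auto
  with \<open>continuous_on UNIV dE\<close> show "C1_fun ext_E"
    unfolding C1_fun_def using has_real_derivative_ext(3)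
    by (intro exI[of _ dE]) (simp add: dE_def)
qed

theorem horizontal_C1_extension:
  "\<exists>\<Gamma>. horizontal_curve \<Gamma> \<and> C1_curve \<Gamma> \<and> (\<forall>t\<in>K. \<Gamma> t = (f t, g t, h t))"
proof (intro exI conjI)
  show "C1_curve (\<lambda>t. (ext_F t, ext_G t, ext_E t))"
    unfolding C1_curve_def using C1_fun_ext by simp
  show "horizontal_curve (\<lambda>t. (ext_F t, ext_G t, ext_E t))"
    unfolding horizontal_curve_def Let_def prod.sel
  proof (intro conjI AE_I2)
    show "abs_cont ext_F" "abs_cont ext_G" "abs_cont ext_E"
      using C1_fun_imp_abs_cont C1_fun_ext by auto
    fix t
    show "\<exists>f' g' h'. (ext_F has_real_derivative f') (at t) \<and> (ext_G has_real_derivative g') (at t) \<and>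
        (ext_E has_real_derivative h') (at t) \<and> h' = 2 * (f' * ext_G t - ext_F t * g')"
      using has_real_derivative_ext[of t] by blast
  qed
  show "\<forall>t\<in>K. (ext_F t, ext_G t, ext_E t) = (f t, g t, h t)"
    using ext_on_K by simp
qed

end

lemma C1_H_empty: "C1_H {} \<gamma>"
proof -
  have "C1_fun (\<lambda>t. 0)" unfolding C1_fun_def
    by (intro exI[of _ "\<lambda>t. 0"]) (auto intro: derivative_intros)
  then have "abs_cont (\<lambda>t. 0)" by (rule C1_fun_imp_abs_cont)
  with \<open>C1_fun (\<lambda>t. 0)\<close> show ?thesis
    unfolding C1_H_def C1_curve_def horizontal_curve_def Let_def
    by (intro exI[of _ "\<lambda>t. (0, 0, 0)"]) (auto intro!: AE_I2 exI[of _ 0] derivative_intros)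
qed

lemma C1_H_imp_whitney_horizontal:
  assumes "C1_H K \<gamma>" and "compact K"
  shows "\<exists>u v. whitney_horizontal K (\<lambda>t. fst (\<gamma> t)) (\<lambda>t. fst (snd (\<gamma> t))) (\<lambda>t. snd (snd (\<gamma> t))) u v"
proof -
  obtain \<Gamma> where "horizontal_curve \<Gamma>" "C1_curve \<Gamma>" and \<Gamma>: "\<forall>t\<in>K. \<Gamma> t = \<gamma> t"
    using assms(1) unfolding C1_H_def by blast
  define F G H where "F t = fst (\<Gamma> t)" and "G t = fst (snd (\<Gamma> t))" and "H t = snd (snd (\<Gamma> t))" for t
  obtain F' G' H' where F: "\<And>t. (F has_real_derivative F' t) (at t)" "continuous_on UNIV F'"
    and G: "\<And>t. (G has_real_derivative G' t) (at t)" "continuous_on UNIV G'"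
    and H: "\<And>t. (H has_real_derivative H' t) (at t)" "continuous_on UNIV H'"
    using \<open>C1_curve \<Gamma>\<close> unfolding C1_curve_def C1_fun_def F_def G_def H_def by metis
  have "horizontal_curve (\<lambda>t. (F t, G t, H t))"
    using \<open>horizontal_curve \<Gamma>\<close> by (simp add: F_def G_def H_def)
  then have "H' t = 2 * (F' t * G t - F t * G' t)" for t
    by (rule horizontal_curve_derivative_eq[OF _ F G H])
  with H(1) have "(H has_real_derivative 2 * (F' t * G t - F t * G' t)) (at t)" for t
    by metis
  then have "whitney_horizontal K F G H F' G'"
    by (rule whitney_horizontal_if_C1[OF F G _ assms(2)])
  moreover have "whitney_horizontal K F G H F' G' \<longleftrightarrow>
      whitney_horizontal K (\<lambda>t. fst (\<gamma> t)) (\<lambda>t. fst (snd (\<gamma> t))) (\<lambda>t. snd (snd (\<gamma> t))) F' G'"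
    unfolding whitney_horizontal_def using \<Gamma> by (simp add: F_def G_def H_def)
  ultimately show ?thesis by blast
qed

lemma C1_H_if_whitney_horizontal:
  assumes "compact K" and "whitney_horizontal K f g h u v" and "\<And>t. t \<in> K \<Longrightarrow> \<gamma> t = (f t, g t, h t)"
  shows "C1_H K \<gamma>"
proof (cases "K = {}")
  case False
  then interpret horizontal_whitney_data K f g h u v
    using assms(1,2) by unfold_locales
  show ?thesis
    using horizontal_C1_extension assms(3) unfolding C1_H_def by auto
qed (simp add: C1_H_empty)

lemma C1_H_iff_whitney_horizontal:
  assumes "compact K"
  shows "C1_H K \<gamma> \<longleftrightarrow>
    (\<exists>u v. whitney_horizontal K (\<lambda>t. fst (\<gamma> t)) (\<lambda>t. fst (snd (\<gamma> t))) (\<lambda>t. snd (snd (\<gamma> t))) u v)"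
  using C1_H_imp_whitney_horizontal[OF _ assms] C1_H_if_whitney_horizontal[OF assms] by fastforce

lemma horizontal_pansu_limits_iff_whitney_horizontal:
  "(\<exists>p. (\<forall>a\<in>K. horizontal_point (p a)) \<and>
      (\<forall>\<epsilon>>0. \<exists>\<delta>>0. \<forall>a\<in>K. \<forall>b\<in>K. 0 < \<bar>b - a\<bar> \<and> \<bar>b - a\<bar> < \<delta> \<longrightarrow>
         norm (hdil (1 / (b - a)) (hmult (hinv (\<gamma> a)) (\<gamma> b)) - p a) < \<epsilon>)) \<longleftrightarrow>
    (\<exists>u v. whitney_horizontal K (\<lambda>t. fst (\<gamma> t)) (\<lambda>t. fst (snd (\<gamma> t))) (\<lambda>t. snd (snd (\<gamma> t))) u v)"
proof
  assume "\<exists>p. (\<forall>a\<in>K. horizontal_point (p a)) \<and> (\<forall>\<epsilon>>0. \<exists>\<delta>>0. \<forall>a\<in>K. \<forall>b\<in>K.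
      0 < \<bar>b - a\<bar> \<and> \<bar>b - a\<bar> < \<delta> \<longrightarrow> norm (hdil (1 / (b - a)) (hmult (hinv (\<gamma> a)) (\<gamma> b)) - p a) < \<epsilon>)"
  then obtain p where "\<forall>a\<in>K. horizontal_point (p a)" and "\<forall>\<epsilon>>0. \<exists>\<delta>>0. \<forall>a\<in>K. \<forall>b\<in>K.
      0 < \<bar>b - a\<bar> \<and> \<bar>b - a\<bar> < \<delta> \<longrightarrow> norm (hdil (1 / (b - a)) (hmult (hinv (\<gamma> a)) (\<gamma> b)) - p a) < \<epsilon>"
    by blast
  then have "whitney_horizontal K (\<lambda>t. fst (\<gamma> t)) (\<lambda>t. fst (snd (\<gamma> t))) (\<lambda>t. snd (snd (\<gamma> t)))
      (\<lambda>t. fst (p t)) (\<lambda>t. fst (snd (p t)))"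
    by (subst pansu_convergence_iff_whitney_horizontal[symmetric])
      (auto simp: horizontal_point_def prod_eq_iff)
  then show "\<exists>u v. whitney_horizontal K (\<lambda>t. fst (\<gamma> t)) (\<lambda>t. fst (snd (\<gamma> t))) (\<lambda>t. snd (snd (\<gamma> t))) u v"
    by blast
next
  assume "\<exists>u v. whitney_horizontal K (\<lambda>t. fst (\<gamma> t)) (\<lambda>t. fst (snd (\<gamma> t))) (\<lambda>t. snd (snd (\<gamma> t))) u v"
  then obtain u v where
    "whitney_horizontal K (\<lambda>t. fst (\<gamma> t)) (\<lambda>t. fst (snd (\<gamma> t))) (\<lambda>t. snd (snd (\<gamma> t))) u v"
    by blast
  moreover have "(\<forall>\<epsilon>>0. \<exists>\<delta>>0. \<forall>a\<in>K. \<forall>b\<in>K. 0 < \<bar>b - a\<bar> \<and> \<bar>b - a\<bar> < \<delta> \<longrightarrow>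
      norm (hdil (1 / (b - a)) (hmult (hinv (\<gamma> a)) (\<gamma> b)) - (u a, v a, 0)) < \<epsilon>) \<longleftrightarrow>
    whitney_horizontal K (\<lambda>t. fst (\<gamma> t)) (\<lambda>t. fst (snd (\<gamma> t))) (\<lambda>t. snd (snd (\<gamma> t))) u v"
    by (rule pansu_convergence_iff_whitney_horizontal) simp_all
  ultimately show "\<exists>p. (\<forall>a\<in>K. horizontal_point (p a)) \<and> (\<forall>\<epsilon>>0. \<exists>\<delta>>0. \<forall>a\<in>K. \<forall>b\<in>K.
      0 < \<bar>b - a\<bar> \<and> \<bar>b - a\<bar> < \<delta> \<longrightarrow> norm (hdil (1 / (b - a)) (hmult (hinv (\<gamma> a)) (\<gamma> b)) - p a) < \<epsilon>)"
    by (intro exI[of _ "\<lambda>t. (u t, v t, 0)"]) (simp add: horizontal_point_def)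
qed

theorem theorem1p4:
  fixes K :: "real set" and \<gamma> :: "real \<Rightarrow> real \<times> real \<times> real"
  assumes "compact K" and "continuous_on K \<gamma>"
  shows "C1_H K \<gamma> \<longleftrightarrow>
    (\<exists>p :: real \<Rightarrow> real \<times> real \<times> real.
       (\<forall>a\<in>K. horizontal_point (p a)) \<and>
       (\<forall>\<epsilon>>0. \<exists>\<delta>>0. \<forall>a\<in>K. \<forall>b\<in>K. 0 < \<bar>b - a\<bar> \<and> \<bar>b - a\<bar> < \<delta> \<longrightarrow>
          norm (hdil (1 / (b - a)) (hmult (hinv (\<gamma> a)) (\<gamma> b)) - p a) < \<epsilon>))"
  by (simp only: C1_H_iff_whitney_horizontal[OF assms(1)] horizontal_pansu_limits_iff_whitney_horizontal)

end
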